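(* Let $A,B$ be finite groups equipped with probability measures $\mu$ on $A$ and $\nu$ on $B$. Let $(\mathcal{M},\tau)$ be a von Neumann algebra with a normal faithful tracial state and $U:A\to\mathcal{U}(\mathcal{M})$, $V:B\to\mathcal{U}(\mathcal{M})$ group homomorphisms. Then \[\mathbf{E}_{a\in A,b\in B}\|[U(a),V(b)]\|_2^2\leq\kappa(\mu)\kappa(\nu)\int\|[U(a),V(b)]\|_2^2\,d\mu(a)\,d\nu(b).\]
   Context: $\|x\|_2=\tau(x^*x)^{1/2}$, $[x,y]=xy-yx$, $\mathbf{E}$ is the average for the uniform probability measure. For a countable group $G$ and a probability measure $\mu$ on $G$, $\kappa(\mu)$ is the smallest number $\kappa\in[0,+\infty]$ such that for every unitary representation $(\pi,\mathcal{H})$ of $G$ and every $\xi\in\mathcal{H}$, $\|\xi-P_{\mathcal{H}^\pi}\xi\|^2\leq\frac{\kappa}{2}\int_G\|\pi(g)\xi-\xi\|^2d\mu(g)$, where $\mathcal{H}^\pi$ is the space of $\pi(G)$-invariant vectors and $P_{\mathcal{H}^\pi}$ the orthogonal projection onto it ($\kappa(\mu)=+\infty$ if no finite constant works, e.g. if the support of $\mu$ does not generate $G$; in that case the right-hand side of the claim is interpreted as $+\infty$). *)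

theory Defs
  imports "HOL-Analysis.Analysis" "HOL-Algebra.Group"
begin

text \<open>A complex inner product space: a real normed vector space with a complex
scalar multiplication extending the real one and a complex inner product
(antilinear in the first, linear in the second argument) inducing the norm.\<close>

class complex_inner = real_normed_vector +
  fixes scaleC :: "complex \<Rightarrow> 'a \<Rightarrow> 'a"
    and cinner :: "'a \<Rightarrow> 'a \<Rightarrow> complex"
  assumes scaleC_add_right: "scaleC c (x + y) = scaleC c x + scaleC c y"
    and scaleC_add_left: "scaleC (c + d) x = scaleC c x + scaleC d x"
    and scaleC_scaleC: "scaleC c (scaleC d x) = scaleC (c * d) x"
    and scaleC_one: "scaleC 1 x = x"
    and scaleR_scaleC: "scaleR r x = scaleC (complex_of_real r) x"
    and cinner_cnj_commute: "cinner x y = cnj (cinner y x)"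
    and cinner_add_right: "cinner x (y + z) = cinner x y + cinner x z"
    and cinner_scaleC_right: "cinner x (scaleC c y) = c * cinner x y"
    and cinner_ge_zero: "Im (cinner x x) = 0 \<and> Re (cinner x x) \<ge> 0"
    and cinner_eq_zero_iff: "cinner x x = 0 \<longleftrightarrow> x = 0"
    and norm_eq_sqrt_cinner: "norm x = sqrt (Re (cinner x x))"

class chilbert_space = complex_inner + complete_space

definition clinear_map :: "('a::complex_inner \<Rightarrow> 'b::complex_inner) \<Rightarrow> bool" where
  "clinear_map T \<longleftrightarrow> (\<forall>x y. T (x + y) = T x + T y) \<and> (\<forall>c x. T (scaleC c x) = scaleC c (T x))"

definition bounded_op :: "('a::complex_inner \<Rightarrow> 'a) \<Rightarrow> bool" where
  "bounded_op T \<longleftrightarrow> clinear_map T \<and> (\<exists>C. \<forall>x. norm (T x) \<le> C * norm x)"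

definition adj :: "('a::complex_inner \<Rightarrow> 'a) \<Rightarrow> ('a \<Rightarrow> 'a)" where
  "adj T = (SOME S. \<forall>x y. cinner (T x) y = cinner x (S y))"

definition commutant :: "('a::complex_inner \<Rightarrow> 'a) set \<Rightarrow> ('a \<Rightarrow> 'a) set" where
  "commutant S = {T. bounded_op T \<and> (\<forall>s\<in>S. T \<circ> s = s \<circ> T)}"

text \<open>von Neumann algebra: a self-adjoint set of bounded operators equal to its
bicommutant (by the bicommutant theorem this is the same as a unital
weak-operator-closed *-subalgebra of B(H)).\<close>
definition von_neumann_algebra :: "('a::chilbert_space \<Rightarrow> 'a) set \<Rightarrow> bool" where
  "von_neumann_algebra M \<longleftrightarrow>
     (\<forall>x\<in>M. bounded_op x) \<and> (\<forall>x\<in>M. adj x \<in> M) \<and> commutant (commutant M) = M"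

definition positive_op :: "('a::complex_inner \<Rightarrow> 'a) \<Rightarrow> bool" where
  "positive_op p \<longleftrightarrow> bounded_op p \<and> adj p = p \<and> (\<forall>v. Re (cinner v (p v)) \<ge> 0)"

definition op_le :: "('a::complex_inner \<Rightarrow> 'a) \<Rightarrow> ('a \<Rightarrow> 'a) \<Rightarrow> bool" where
  "op_le x y \<longleftrightarrow> positive_op (\<lambda>v. y v - x v)"

definition normal_functional :: "('a::chilbert_space \<Rightarrow> 'a) set \<Rightarrow> (('a \<Rightarrow> 'a) \<Rightarrow> complex) \<Rightarrow> bool" where
  "normal_functional M \<tau> \<longleftrightarrow>
     (\<forall>D s. D \<subseteq> M \<and> D \<noteq> {} \<and> (\<forall>d\<in>D. positive_op d)
        \<and> (\<forall>d1\<in>D. \<forall>d2\<in>D. \<exists>d3\<in>D. op_le d1 d3 \<and> op_le d2 d3)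
        \<and> (\<exists>C. \<forall>d\<in>D. \<forall>v. norm (d v) \<le> C * norm v)
        \<and> s \<in> M \<and> (\<forall>d\<in>D. op_le d s) \<and> (\<forall>t\<in>M. (\<forall>d\<in>D. op_le d t) \<longrightarrow> op_le s t)
        \<longrightarrow> Re (\<tau> s) = (SUP d\<in>D. Re (\<tau> d)))"

definition normal_faithful_tracial_state ::
    "('a::chilbert_space \<Rightarrow> 'a) set \<Rightarrow> (('a \<Rightarrow> 'a) \<Rightarrow> complex) \<Rightarrow> bool" where
  "normal_faithful_tracial_state M \<tau> \<longleftrightarrow>
     (\<forall>x\<in>M. \<forall>y\<in>M. \<tau> (\<lambda>v. x v + y v) = \<tau> x + \<tau> y)
   \<and> (\<forall>c. \<forall>x\<in>M. \<tau> (\<lambda>v. scaleC c (x v)) = c * \<tau> x)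
   \<and> (\<forall>x\<in>M. Im (\<tau> (adj x \<circ> x)) = 0 \<and> Re (\<tau> (adj x \<circ> x)) \<ge> 0)
   \<and> \<tau> id = 1
   \<and> (\<forall>x\<in>M. \<forall>y\<in>M. \<tau> (x \<circ> y) = \<tau> (y \<circ> x))
   \<and> (\<forall>x\<in>M. \<tau> (adj x \<circ> x) = 0 \<longrightarrow> x = (\<lambda>_. 0))
   \<and> normal_functional M \<tau>"

definition unitary_in :: "('a::complex_inner \<Rightarrow> 'a) set \<Rightarrow> ('a \<Rightarrow> 'a) \<Rightarrow> bool" where
  "unitary_in M u \<longleftrightarrow> u \<in> M \<and> adj u \<circ> u = id \<and> u \<circ> adj u = id"

definition unitary_hom :: "('g, 'z) monoid_scheme \<Rightarrow> ('a::complex_inner \<Rightarrow> 'a) set \<Rightarrow> ('g \<Rightarrow> 'a \<Rightarrow> 'a) \<Rightarrow> bool" where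
  "unitary_hom G M U \<longleftrightarrow> (\<forall>g\<in>carrier G. unitary_in M (U g))
     \<and> (\<forall>g\<in>carrier G. \<forall>h\<in>carrier G. U (g \<otimes>\<^bsub>G\<^esub> h) = U g \<circ> U h)"

definition tnorm2_sq :: "(('a::complex_inner \<Rightarrow> 'a) \<Rightarrow> complex) \<Rightarrow> ('a \<Rightarrow> 'a) \<Rightarrow> real" where
  "tnorm2_sq \<tau> x = Re (\<tau> (adj x \<circ> x))"

definition commutator :: "('a::complex_inner \<Rightarrow> 'a) \<Rightarrow> ('a \<Rightarrow> 'a) \<Rightarrow> ('a \<Rightarrow> 'a)" where
  "commutator x y = (\<lambda>v. x (y v) - y (x v))"

definition unitary_op :: "('h::complex_inner \<Rightarrow> 'h) \<Rightarrow> bool" where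
  "unitary_op T \<longleftrightarrow> clinear_map T \<and> surj T \<and> (\<forall>x. norm (T x) = norm x)"

definition unitary_rep :: "('g, 'z) monoid_scheme \<Rightarrow> ('g \<Rightarrow> 'h::complex_inner \<Rightarrow> 'h) \<Rightarrow> bool" where
  "unitary_rep G \<pi> \<longleftrightarrow> (\<forall>g\<in>carrier G. unitary_op (\<pi> g))
     \<and> (\<forall>g\<in>carrier G. \<forall>h\<in>carrier G. \<pi> (g \<otimes>\<^bsub>G\<^esub> h) = \<pi> g \<circ> \<pi> h)"

definition invariant_vectors :: "('g, 'z) monoid_scheme \<Rightarrow> ('g \<Rightarrow> 'h::complex_inner \<Rightarrow> 'h) \<Rightarrow> 'h set" where
  "invariant_vectors G \<pi> = {\<xi>. \<forall>g\<in>carrier G. \<pi> g \<xi> = \<xi>}"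

definition orth_proj :: "'h::complex_inner set \<Rightarrow> 'h \<Rightarrow> 'h" where
  "orth_proj S \<xi> = (THE p. p \<in> S \<and> (\<forall>s\<in>S. cinner s (\<xi> - p) = 0))"

text \<open>kappa(mu), computed over unitary representations on the Hilbert space 'h
(the value of Inf over the empty set is \<top> = +\<infinity>).  For a finite group this
agrees with the definition over all Hilbert spaces as soon as 'h is
infinite-dimensional.\<close>
definition kappa :: "'h::chilbert_space itself \<Rightarrow> ('g, 'z) monoid_scheme \<Rightarrow> ('g \<Rightarrow> real) \<Rightarrow> ennreal" where
  "kappa _ G \<mu> = Inf {ennreal k | k. k \<ge> 0 \<and>
     (\<forall>\<pi> :: 'g \<Rightarrow> 'h \<Rightarrow> 'h. unitary_rep G \<pi> \<longrightarrow> (\<forall>\<xi>.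
        (norm (\<xi> - orth_proj (invariant_vectors G \<pi>) \<xi>))\<^sup>2
          \<le> k / 2 * (\<Sum>g\<in>carrier G. \<mu> g * (norm (\<pi> g \<xi> - \<xi>))\<^sup>2)))}"

definition infinite_dimensional :: "'h::complex_inner itself \<Rightarrow> bool" where
  "infinite_dimensional _ \<longleftrightarrow> (\<forall>S :: 'h set. finite S \<longrightarrow> (\<exists>x. x \<noteq> 0 \<and> (\<forall>s\<in>S. cinner s x = 0)))"

definition prob_on :: "'g set \<Rightarrow> ('g \<Rightarrow> real) \<Rightarrow> bool" where
  "prob_on X \<mu> \<longleftrightarrow> (\<forall>x\<in>X. \<mu> x \<ge> 0) \<and> (\<Sum>x\<in>X. \<mu> x) = 1"

end

theory Submission
  imports Defs
begin

(* Fix X in M and put F(g) = U(g)^* X U(g).  Then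
   F(a^-1 g) - F(g) = U(g)^* [U(a), X] U(a^-1 g), so ||[U(a), X]||_2 is the distance by which
   left translation by a moves the point F(g), for every g.  A Cholesky factorisation of the
   Gram matrix tau(F(g)^* F(h)) realises the F(g) isometrically as points of C^A, and writing
   their coordinates on an orthonormal family u(g, k) of the infinite-dimensional space H turns
   left translation into a unitary representation of A whose projection onto the invariant
   vectors averages over g.  The defining inequality of kappa(mu) for this representation and
   the variance identity sum_{g,h} |x_g - x_h|^2 = 2 |A| sum_g |x_g - mean|^2 then give
   E_a ||[U(a), X]||_2^2 <= kappa(mu) sum_a mu(a) ||[U(a), X]||_2^2.
   Using this for A with X = V(b), for B with X = U(a), and averaging gives the theorem. *)

section \<open>Complex inner product spaces\<close>

lemma scaleC_zero_left [simp]: "scaleC 0 (x::'a::complex_inner) = 0"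
  by (metis add_cancel_right_right add_0 scaleC_add_left)

lemma scaleC_zero_right [simp]: "scaleC c (0::'a::complex_inner) = 0"
  by (metis add_cancel_right_right add_0 scaleC_add_right)

lemma scaleC_minus_right: "scaleC c (- (x::'a::complex_inner)) = - scaleC c x"
  by (metis add_eq_0_iff neg_eq_iff_add_eq_0 scaleC_add_right scaleC_zero_right)

lemma scaleC_diff_right: "scaleC c ((x::'a::complex_inner) - y) = scaleC c x - scaleC c y"
  by (metis diff_conv_add_uminus scaleC_add_right scaleC_minus_right)

lemma scaleC_diff_left: "scaleC (c - d) (x::'a::complex_inner) = scaleC c x - scaleC d x"
  by (metis add_diff_cancel diff_add_cancel scaleC_add_left)

lemma scaleC_sum_right: "scaleC c (\<Sum>i\<in>S. f i) = (\<Sum>i\<in>S. scaleC c (f i :: 'a::complex_inner))"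
  by (induction S rule: infinite_finite_induct) (auto simp: scaleC_add_right)

lemma cinner_zero_right [simp]: "cinner (x::'a::complex_inner) 0 = 0"
  by (metis add_cancel_right_right cinner_add_right)

lemma cinner_zero_left [simp]: "cinner 0 (x::'a::complex_inner) = 0"
  by (metis cinner_cnj_commute cinner_zero_right complex_cnj_zero)

lemma cinner_add_left: "cinner ((x::'a::complex_inner) + y) z = cinner x z + cinner y z"
  by (metis cinner_add_right cinner_cnj_commute complex_cnj_add)

lemma cinner_scaleC_left: "cinner (scaleC c (x::'a::complex_inner)) y = cnj c * cinner x y"
  by (metis cinner_cnj_commute cinner_scaleC_right complex_cnj_cnj complex_cnj_mult)

lemma cinner_diff_right: "cinner (x::'a::complex_inner) (y - z) = cinner x y - cinner x z"
  by (metis add_diff_cancel cinner_add_right diff_add_cancel)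

lemma cinner_diff_left: "cinner ((x::'a::complex_inner) - y) z = cinner x z - cinner y z"
  by (metis add_diff_cancel cinner_add_left diff_add_cancel)

lemma cinner_minus_left: "cinner (- x) (y::'a::complex_inner) = - cinner x y"
  by (metis cinner_diff_left cinner_zero_left diff_0)

lemma cinner_minus_right: "cinner (x::'a::complex_inner) (- y) = - cinner x y"
  by (metis cinner_diff_right cinner_zero_right diff_0)

lemma cinner_sum_right: "cinner (x::'a::complex_inner) (\<Sum>i\<in>S. f i) = (\<Sum>i\<in>S. cinner x (f i))"
  by (induction S rule: infinite_finite_induct) (auto simp: cinner_add_right)

lemma cinner_sum_left: "cinner (\<Sum>i\<in>S. f i) (x::'a::complex_inner) = (\<Sum>i\<in>S. cinner (f i) x)"
  by (induction S rule: infinite_finite_induct) (auto simp: cinner_add_left)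

lemma cinner_self: "cinner (x::'a::complex_inner) x = complex_of_real ((norm x)\<^sup>2)"
  using cinner_ge_zero[of x] norm_eq_sqrt_cinner[of x] by (simp add: complex_eq_iff)

lemma power2_norm_eq_cinner: "(norm (x::'a::complex_inner))\<^sup>2 = Re (cinner x x)"
  by (simp add: cinner_self)

lemma cinner_eqI: "(\<And>x. cinner x a = cinner x (b::'a::complex_inner)) \<Longrightarrow> a = b"
  by (metis cinner_diff_right cinner_eq_zero_iff diff_self eq_iff_diff_eq_0)

lemma norm_scaleC: "norm (scaleC c (x::'a::complex_inner)) = cmod c * norm x"
proof -
  have "cinner (scaleC c x) (scaleC c x) = (cnj c * c) * cinner x x"
    by (simp add: cinner_scaleC_left cinner_scaleC_right)
  also have "\<dots> = complex_of_real ((cmod c * norm x)\<^sup>2)"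
    by (metis cinner_self complex_norm_square mult.commute of_real_mult power_mult_distrib)
  finally have "(norm (scaleC c x))\<^sup>2 = (cmod c * norm x)\<^sup>2"
    by (simp add: power2_norm_eq_cinner)
  then show ?thesis by (simp add: power2_eq_iff_nonneg)
qed

lemma norm_add_sq:
  "(norm ((x::'a::complex_inner) + y))\<^sup>2 = (norm x)\<^sup>2 + (norm y)\<^sup>2 + 2 * Re (cinner x y)"
proof -
  have "Re (cinner y x) = Re (cinner x y)" by (subst cinner_cnj_commute) simp
  then show ?thesis by (simp add: power2_norm_eq_cinner cinner_add_left cinner_add_right)
qed

lemma norm_diff_sq:
  "(norm ((x::'a::complex_inner) - y))\<^sup>2 = (norm x)\<^sup>2 + (norm y)\<^sup>2 - 2 * Re (cinner x y)"
proof -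
  have "Re (cinner y x) = Re (cinner x y)" by (subst cinner_cnj_commute) simp
  then show ?thesis by (simp add: power2_norm_eq_cinner cinner_diff_left cinner_diff_right)
qed

lemma parallelogram_law:
  "(norm ((x::'a::complex_inner) - y))\<^sup>2 = 2 * (norm x)\<^sup>2 + 2 * (norm y)\<^sup>2 - (norm (x + y))\<^sup>2"
  using norm_add_sq[of x y] norm_diff_sq[of x y] by simp

lemma pythagoras_cinner:
  "cinner (x::'a::complex_inner) y = 0 \<Longrightarrow> (norm (x + y))\<^sup>2 = (norm x)\<^sup>2 + (norm y)\<^sup>2"
  by (simp add: norm_add_sq)

lemma norm_cinner_le: "cmod (cinner (x::'a::complex_inner) y) \<le> norm x * norm y"
proof (cases "x = 0")
  case False
  define t where "t = cinner x y / complex_of_real ((norm x)\<^sup>2)"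
  have "cinner x (y - scaleC t x) = 0"
    using False by (simp add: t_def cinner_diff_right cinner_scaleC_right cinner_self)
  then have "cinner (scaleC t x) (y - scaleC t x) = 0"
    by (simp add: cinner_scaleC_left)
  from pythagoras_cinner[OF this]
  have "(cmod t * norm x)\<^sup>2 \<le> (norm y)\<^sup>2" by (simp add: norm_scaleC)
  then have "cmod t * norm x \<le> norm y"
    by (rule power2_le_imp_le) simp
  moreover have "cmod t * norm x = cmod (cinner x y) / norm x"
    using False by (simp add: t_def norm_divide norm_mult power2_eq_square)
  ultimately show ?thesis
    using False by (simp add: divide_le_eq mult.commute)
qed simp

section \<open>Riesz representation and adjoints\<close>

lemma Cauchy_if_sq_dist_le:
  fixes z :: "nat \<Rightarrow> 'a::real_normed_vector"
  assumes "\<And>m n. (norm (z m - z n))\<^sup>2 \<le> 2 * inverse (real (Suc m)) + 2 * inverse (real (Suc n))"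
  shows "Cauchy z"
proof (rule metric_CauchyI)
  fix e :: real assume e: "0 < e"
  obtain N :: nat where N: "4 / e\<^sup>2 < real N" using reals_Archimedean2 by blast
  then have N_pos: "real N > 0" using e by (smt (verit) divide_pos_pos zero_less_power)
  have "dist (z m) (z n) < e" if "m \<ge> N" "n \<ge> N" for m n
  proof -
    have "inverse (real (Suc m)) < inverse (real N)" "inverse (real (Suc n)) < inverse (real N)"
      using that N_pos by (simp_all add: less_imp_inverse_less)
    moreover have "4 * inverse (real N) < e\<^sup>2" using N N_pos e by (simp add: field_simps)
    ultimately have "(norm (z m - z n))\<^sup>2 < e\<^sup>2" using assms[of m n] by simp
    then show ?thesis using e by (simp add: dist_norm power2_less_imp_less)
  qed
  then show "\<exists>N. \<forall>m\<ge>N. \<forall>n\<ge>N. dist (z m) (z n) < e" by blast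
qed

lemma exists_min_norm_point:
  fixes S :: "'a::chilbert_space set"
  assumes "closed S" "S \<noteq> {}"
    and midpoint_closed: "\<And>x y. x \<in> S \<Longrightarrow> y \<in> S \<Longrightarrow> scaleR (1/2) (x + y) \<in> S"
  shows "\<exists>L\<in>S. \<forall>h\<in>S. norm L \<le> norm h"
proof -
  define d where "d = Inf ((\<lambda>x. (norm x)\<^sup>2) ` S)"
  have d_le: "d \<le> (norm h)\<^sup>2" if "h \<in> S" for h
    unfolding d_def using that by (intro cInf_lower bdd_belowI[of _ 0]) auto
  have "\<exists>h\<in>S. (norm h)\<^sup>2 < d + inverse (real (Suc n))" for n
    using cInf_lessD[of "(\<lambda>x. (norm x)\<^sup>2) ` S" "d + inverse (real (Suc n))"] assms(2)
    by (auto simp: d_def)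
  then obtain z where zS: "\<And>n. z n \<in> S"
    and z_almost_min: "\<And>n. (norm (z n))\<^sup>2 < d + inverse (real (Suc n))"
    by metis
  have dist_z: "(norm (z m - z n))\<^sup>2 \<le> 2 * inverse (real (Suc m)) + 2 * inverse (real (Suc n))"
    for m n
  proof -
    have "d \<le> (norm (scaleR (1/2) (z m + z n)))\<^sup>2"
      using zS by (intro d_le midpoint_closed)
    then have "4 * d \<le> (norm (z m + z n))\<^sup>2" by (simp add: power2_eq_square)
    then show ?thesis
      using parallelogram_law[of "z m" "z n"] z_almost_min[of m] z_almost_min[of n] by simp
  qed
  have "Cauchy z"
    using dist_z by (rule Cauchy_if_sq_dist_le)
  then obtain L where L: "z \<longlonglongrightarrow> L" using Cauchy_convergent_iff convergent_def by blast
  have "L \<in> S" using closed_sequentially[OF assms(1) _ L] zS by blast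
  moreover have L_le_d: "(norm L)\<^sup>2 \<le> d"
  proof (rule LIMSEQ_le)
    show "(\<lambda>n. (norm (z n))\<^sup>2) \<longlonglongrightarrow> (norm L)\<^sup>2" using L by (intro tendsto_intros)
    show "(\<lambda>n. d + inverse (real (Suc n))) \<longlonglongrightarrow> d"
      using tendsto_add[OF tendsto_const LIMSEQ_inverse_real_of_nat] by simp
  qed (use z_almost_min less_imp_le in blast)
  moreover have "norm L \<le> norm h" if "h \<in> S" for h
    using order_trans[OF L_le_d d_le[OF that]] by (rule power2_le_imp_le) simp
  ultimately show ?thesis by blast
qed

lemma orthogonal_if_min_norm:
  fixes L v :: "'a::complex_inner"
  assumes min: "\<And>t. norm L \<le> norm (L + scaleC t v)"
  shows "cinner L v = 0"
proof -
  define c where "c = cinner L v"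
  define s where "s = 1 / ((norm v)\<^sup>2 + 1)"
  have denom_pos: "(norm v)\<^sup>2 + 1 > 0" by (simp add: add_nonneg_pos)
  then have s_pos: "s > 0" and s_small: "s * (norm v)\<^sup>2 < 1"
    by (simp_all add: s_def field_simps)
  define t where "t = - complex_of_real s * cnj c"
  have "Re (cinner L (scaleC t v)) = - s * (cmod c)\<^sup>2"
    by (simp add: t_def cinner_scaleC_right c_def[symmetric] cmod_power2)
      (simp add: power2_eq_square algebra_simps)
  moreover have "norm (scaleC t v) = s * cmod c * norm v"
    using s_pos by (simp add: norm_scaleC t_def norm_mult)
  ultimately have "(norm (L + scaleC t v))\<^sup>2 = (norm L)\<^sup>2 + s * (cmod c)\<^sup>2 * (s * (norm v)\<^sup>2 - 2)"
    unfolding norm_add_sq by (simp add: power2_eq_square algebra_simps)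
  moreover have "(norm L)\<^sup>2 \<le> (norm (L + scaleC t v))\<^sup>2"
    by (intro power_mono min) simp
  ultimately have "0 \<le> s * ((cmod c)\<^sup>2 * (s * (norm v)\<^sup>2 - 2))" by simp
  then have "0 \<le> (cmod c)\<^sup>2 * (s * (norm v)\<^sup>2 - 2)"
    using s_pos by (simp add: zero_le_mult_iff)
  then have "(cmod c)\<^sup>2 \<le> 0"
    using s_small by (simp add: zero_le_mult_iff)
  then show ?thesis by (simp add: c_def)
qed

lemma riesz_representation:
  fixes f :: "'a::chilbert_space \<Rightarrow> complex"
  assumes add: "\<And>x y. f (x + y) = f x + f y" and scale: "\<And>c x. f (scaleC c x) = c * f x"
    and bound: "\<And>x. cmod (f x) \<le> K * norm x"
  shows "\<exists>z. \<forall>x. f x = cinner z x"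
proof (cases "\<forall>x. f x = 0")
  case False
  then obtain x0 where x0: "f x0 \<noteq> 0" by blast
  have f_diff: "f (x - y) = f x - f y" for x y by (metis add diff_add_cancel eq_diff_eq)
  have f_scaleR: "f (scaleR r x) = complex_of_real r * f x" for r x
    by (simp add: scaleR_scaleC scale)
  define H where "H = {x. f x = 1}"
  have "bounded_linear f"
    by (rule bounded_linear_intro[where K = K])
      (use add f_scaleR bound in \<open>simp_all add: scaleR_conv_of_real mult.commute\<close>)
  then have H_closed: "closed H"
    unfolding H_def by (intro closed_Collect_eq linear_continuous_on continuous_on_const)
  have H_nonempty: "H \<noteq> {}"
    using x0 by (auto simp: H_def scale intro!: exI[of _ "scaleC (inverse (f x0)) x0"])
  have H_midpoint: "scaleR (1/2) (x + y) \<in> H" if "x \<in> H" "y \<in> H" for x y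
    using that by (simp add: H_def f_scaleR add)
  obtain L where "L \<in> H" and "\<forall>h\<in>H. norm L \<le> norm h"
    using exists_min_norm_point[OF H_closed H_nonempty H_midpoint] by blast
  then have L: "f L = 1" and L_min: "\<And>h. f h = 1 \<Longrightarrow> norm L \<le> norm h"
    by (auto simp: H_def)
  have kernel_orth: "cinner L v = 0" if "f v = 0" for v
    using that L by (intro orthogonal_if_min_norm L_min) (simp add: add scale)
  have L_nonzero: "cinner L L \<noteq> 0"
    using L f_diff[of 0 0] cinner_eq_zero_iff[of L] by auto
  have key: "cinner L x = f x * cinner L L" for x
    using kernel_orth[of "x - scaleC (f x) L"]
    by (simp add: f_diff scale L cinner_diff_right cinner_scaleC_right)
  have "f x = cinner (scaleC (inverse (cnj (cinner L L))) L) x" for x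
    using L_nonzero key[of x] by (simp add: cinner_scaleC_left)
  then show ?thesis by blast
qed (auto intro: exI[of _ 0])

definition has_adj :: "('a::complex_inner \<Rightarrow> 'a) \<Rightarrow> ('a \<Rightarrow> 'a) \<Rightarrow> bool" where
  "has_adj T S \<longleftrightarrow> (\<forall>x y. cinner (T x) y = cinner x (S y))"

lemma adj_eqI:
  assumes "has_adj T S"
  shows "adj T = S"
proof -
  have "\<exists>S. \<forall>x y. cinner (T x) y = cinner x (S y)"
    using assms unfolding has_adj_def by blast
  then have "\<forall>x y. cinner (T x) y = cinner x (adj T y)"
    unfolding adj_def by (rule someI_ex)
  with assms show ?thesis
    unfolding has_adj_def by (metis cinner_eqI ext)
qed

lemma has_adj_comp: "has_adj T1 S1 \<Longrightarrow> has_adj T2 S2 \<Longrightarrow> has_adj (T1 \<circ> T2) (S2 \<circ> S1)"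
  unfolding has_adj_def by simp

lemma has_adj_scaleC_sum:
  "(\<And>i. i \<in> I \<Longrightarrow> has_adj (T i) (S i)) \<Longrightarrow>
    has_adj (\<lambda>v. \<Sum>i\<in>I. scaleC (c i) (T i v)) (\<lambda>v. \<Sum>i\<in>I. scaleC (cnj (c i)) (S i v))"
  unfolding has_adj_def by (simp add: cinner_sum_left cinner_sum_right cinner_scaleC_left cinner_scaleC_right)

text \<open>Since adj is defined by Hilbert choice, this is what makes it the adjoint.\<close>

lemma bounded_op_has_adj:
  fixes T :: "'a::chilbert_space \<Rightarrow> 'a"
  assumes "bounded_op T"
  shows "has_adj T (adj T)"
proof -
  from assms obtain C where lin: "clinear_map T" and C: "\<And>x. norm (T x) \<le> C * norm x"
    unfolding bounded_op_def by blast
  have "\<exists>z. \<forall>x. cinner y (T x) = cinner z x" for y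
  proof (rule riesz_representation)
    show "cinner y (T (x + x')) = cinner y (T x) + cinner y (T x')" for x x'
      using lin by (simp add: clinear_map_def cinner_add_right)
    show "cinner y (T (scaleC c x)) = c * cinner y (T x)" for c x
      using lin by (simp add: clinear_map_def cinner_scaleC_right)
    show "cmod (cinner y (T x)) \<le> (norm y * C) * norm x" for x
      using norm_cinner_le[of y "T x"] mult_left_mono[OF C[of x], of "norm y"]
      by (simp add: mult.assoc)
  qed
  then obtain S where "\<And>y x. cinner y (T x) = cinner (S y) x" by metis
  then have "has_adj T S" unfolding has_adj_def by (metis cinner_cnj_commute)
  then show ?thesis using adj_eqI by metis
qed

lemma clinear_map_diff: "clinear_map f \<Longrightarrow> f (x - y) = f x - f (y::'a::complex_inner)"
  unfolding clinear_map_def by (metis add_diff_cancel diff_add_cancel)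

lemma clinear_map_sum:
  assumes "clinear_map f"
  shows "f (\<Sum>i\<in>I. g i) = (\<Sum>i\<in>I. f (g i :: 'a::complex_inner))"
proof -
  have "f 0 = 0" using clinear_map_diff[OF assms, of 0 0] by simp
  then show ?thesis
    using assms by (induction I rule: infinite_finite_induct) (auto simp: clinear_map_def)
qed

lemma bounded_op_clinear: "bounded_op x \<Longrightarrow> clinear_map x"
  unfolding bounded_op_def by blast

lemma bounded_op_nonneg_bound: "bounded_op x \<Longrightarrow> \<exists>C\<ge>0. \<forall>v. norm (x v) \<le> C * norm v"
  unfolding bounded_op_def
  by (metis (no_types) max.cobounded2 max.commute mult_right_mono norm_ge_zero order_trans)

lemma bounded_op_comp: "bounded_op x \<Longrightarrow> bounded_op y \<Longrightarrow> bounded_op (x \<circ> y)"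
proof -
  assume x: "bounded_op x" and y: "bounded_op y"
  obtain Cx where Cx: "Cx \<ge> 0" "\<And>v. norm (x v) \<le> Cx * norm v"
    using bounded_op_nonneg_bound[OF x] by blast
  obtain Cy where Cy: "\<And>v. norm (y v) \<le> Cy * norm v" using y unfolding bounded_op_def by blast
  have "norm (x (y v)) \<le> (Cx * Cy) * norm v" for v
    using Cx(2)[of "y v"] mult_left_mono[OF Cy[of v] Cx(1)] by (simp add: mult.assoc)
  moreover have "clinear_map (x \<circ> y)" using x y unfolding bounded_op_def clinear_map_def by simp
  ultimately show ?thesis unfolding bounded_op_def by auto
qed

lemma bounded_op_add: "bounded_op x \<Longrightarrow> bounded_op y \<Longrightarrow> bounded_op (\<lambda>v. x v + y v)"
proof -
  assume x: "bounded_op x" and y: "bounded_op y"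
  obtain Cx Cy where Cx: "\<And>v. norm (x v) \<le> Cx * norm v" and Cy: "\<And>v. norm (y v) \<le> Cy * norm v"
    using x y unfolding bounded_op_def by blast
  have "norm (x v + y v) \<le> (Cx + Cy) * norm v" for v
    using norm_triangle_ineq[of "x v" "y v"] Cx[of v] Cy[of v] by (simp add: algebra_simps)
  moreover have "clinear_map (\<lambda>v. x v + y v)"
    using x y unfolding bounded_op_def clinear_map_def by (simp add: scaleC_add_right)
  ultimately show ?thesis unfolding bounded_op_def by auto
qed

lemma bounded_op_scaleC: "bounded_op x \<Longrightarrow> bounded_op (\<lambda>v. scaleC c (x v))"
proof -
  assume x: "bounded_op x"
  obtain Cx where Cx: "\<And>v. norm (x v) \<le> Cx * norm v" using x unfolding bounded_op_def by blast
  have "norm (scaleC c (x v)) \<le> (cmod c * Cx) * norm v" for v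
    using mult_left_mono[OF Cx[of v], of "cmod c"] by (simp add: norm_scaleC mult.assoc)
  moreover have "clinear_map (\<lambda>v. scaleC c (x v))"
    using x unfolding bounded_op_def clinear_map_def by (simp add: scaleC_add_right scaleC_scaleC mult.commute)
  ultimately show ?thesis unfolding bounded_op_def by auto
qed

lemma bounded_op_zero: "bounded_op (\<lambda>v::'a::complex_inner. 0::'a)"
  unfolding bounded_op_def clinear_map_def by (auto intro: exI[of _ 0])

section \<open>Positive semidefinite matrices and Gram factorisation\<close>

definition qform :: "'i set \<Rightarrow> ('i \<Rightarrow> 'i \<Rightarrow> complex) \<Rightarrow> ('i \<Rightarrow> complex) \<Rightarrow> complex" where
  "qform I G c = (\<Sum>i\<in>I. \<Sum>j\<in>I. cnj (c i) * c j * G i j)"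

text \<open>Only real nonnegative values of the form are required; Hermitian symmetry follows
  (psd_on_hermitian).\<close>

definition psd_on :: "'i set \<Rightarrow> ('i \<Rightarrow> 'i \<Rightarrow> complex) \<Rightarrow> bool" where
  "psd_on I G \<longleftrightarrow> (\<forall>c. Im (qform I G c) = 0 \<and> 0 \<le> Re (qform I G c))"

lemma qform_cong:
  "(\<And>i. i \<in> I \<Longrightarrow> c i = c' i) \<Longrightarrow> qform I G c = qform I G c'"
  unfolding qform_def by (intro sum.cong refl) auto

lemma qform_restrict:
  fixes c :: "'i \<Rightarrow> complex"
  assumes "finite I" "S \<subseteq> I" "\<And>i. i \<in> I - S \<Longrightarrow> c i = 0"
  shows "qform I G c = qform S G c"
proof -
  have "qform I G c = (\<Sum>i\<in>S. \<Sum>j\<in>I. cnj (c i) * c j * G i j)"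
    unfolding qform_def using assms by (intro sum.mono_neutral_right) auto
  also have "\<dots> = qform S G c"
    unfolding qform_def using assms by (intro sum.cong refl sum.mono_neutral_right) auto
  finally show ?thesis .
qed

lemma psd_on_subset:
  assumes "psd_on I G" "finite I" "S \<subseteq> I"
  shows "psd_on S G"
  unfolding psd_on_def
proof
  fix c :: "_ \<Rightarrow> complex"
  define c' where "c' i = (if i \<in> S then c i else 0)" for i
  have "qform S G c = qform S G c'"
    by (rule qform_cong) (simp add: c'_def)
  also have "\<dots> = qform I G c'"
    using assms(2,3) by (intro qform_restrict[symmetric]) (auto simp: c'_def)
  finally show "Im (qform S G c) = 0 \<and> 0 \<le> Re (qform S G c)"
    using assms(1) unfolding psd_on_def by simp
qed

lemma qform_two_points:
  "x \<noteq> y \<Longrightarrow> qform {x, y} G c =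
     cnj (c x) * c x * G x x + cnj (c x) * c y * G x y + cnj (c y) * c x * G y x + cnj (c y) * c y * G y y"
  by (simp add: qform_def)

lemma psd_on_diag:
  assumes "psd_on I G" "finite I" "i \<in> I"
  shows "Im (G i i) = 0" "0 \<le> Re (G i i)"
proof -
  have "psd_on {i} G" using psd_on_subset[OF assms(1,2), of "{i}"] assms(3) by simp
  then have "Im (qform {i} G (\<lambda>_. 1)) = 0 \<and> 0 \<le> Re (qform {i} G (\<lambda>_. 1))"
    unfolding psd_on_def by blast
  then show "Im (G i i) = 0" "0 \<le> Re (G i i)" by (simp_all add: qform_def)
qed

lemma psd_on_hermitian:
  assumes "psd_on I G" "finite I" "i \<in> I" "j \<in> I"
  shows "G i j = cnj (G j i)"
proof (cases "i = j")
  case True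
  then show ?thesis using psd_on_diag(1)[OF assms(1-3)] by (simp add: complex_eq_iff)
next
  case False
  have psd2: "psd_on {i, j} G" using psd_on_subset[OF assms(1,2), of "{i, j}"] assms(3,4) by simp
  have "Im (qform {i, j} G (\<lambda>_. 1)) = 0" "Im (qform {i, j} G (\<lambda>k. if k = i then 1 else \<i>)) = 0"
    using psd2 unfolding psd_on_def by blast+
  moreover have "Im (G i i) = 0" "Im (G j j) = 0"
    using psd_on_diag(1)[OF assms(1,2)] assms(3,4) by auto
  ultimately have "Im (G i j) + Im (G j i) = 0" "Re (G i j) - Re (G j i) = 0"
    using False by (simp_all add: qform_two_points)
  then show ?thesis by (simp add: complex_eq_iff)
qed

lemma psd_on_zero_row:
  assumes "psd_on I G" "finite I" "x \<in> I" "y \<in> I" "G x x = 0"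
  shows "G x y = 0"
proof (rule ccontr)
  assume g: "G x y \<noteq> 0"
  then have "x \<noteq> y" using assms(5) by auto
  define R where "R = (Re (G y y) + 1) / (cmod (G x y))\<^sup>2"
  have R: "R * (cmod (G x y))\<^sup>2 = Re (G y y) + 1" using g by (simp add: R_def)
  define c where "c k = (if k = x then - complex_of_real R * G x y else 1)" for k
  have "psd_on {x, y} G" using psd_on_subset[OF assms(1,2), of "{x, y}"] assms(3,4) by simp
  then have "0 \<le> Re (qform {x, y} G c)" unfolding psd_on_def by blast
  also have "qform {x, y} G c = - 2 * complex_of_real R * (G x y * cnj (G x y)) + G y y"
    using \<open>x \<noteq> y\<close> assms(5) psd_on_hermitian[OF assms(1,2,4,3)]
    by (simp add: qform_two_points c_def algebra_simps)
  also have "Re \<dots> = - 2 * (R * (cmod (G x y))\<^sup>2) + Re (G y y)"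
    by (simp add: complex_norm_square[symmetric] del: of_real_power)
  finally show False using R psd_on_diag(2)[OF assms(1,2,4)] by simp
qed

lemma qform_insert:
  assumes "finite F" "x \<notin> F"
  shows "qform (insert x F) G c = cnj (c x) * c x * G x x + cnj (c x) * (\<Sum>j\<in>F. c j * G x j)
    + c x * (\<Sum>i\<in>F. cnj (c i) * G i x) + qform F G c"
  using assms by (simp add: qform_def sum.distrib sum_distrib_left ac_simps)

text \<open>For G x x = 0 the complement is G itself, because x / 0 = 0.\<close>

lemma psd_on_schur_complement:
  assumes psd: "psd_on (insert x F) G" and F: "finite F" "x \<notin> F"
  shows "psd_on F (\<lambda>i j. G i j - cnj (G x i) * G x j / G x x)"
  unfolding psd_on_def
proof
  fix c :: "_ \<Rightarrow> complex"
  define a where "a = G x x"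
  define s where "s = (\<Sum>j\<in>F. c j * G x j)"
  define t where "t = - s / a"
  define c' where "c' = c(x := t)"
  have c'_F: "c' i = c i" if "i \<in> F" for i
    using F that by (auto simp: c'_def)
  have a_real: "cnj a = a"
    using psd_on_diag(1)[OF psd] F by (simp add: a_def complex_eq_iff)
  have "G i x = cnj (G x i)" if "i \<in> F" for i
    by (rule psd_on_hermitian[OF psd]) (use F that in auto)
  then have "(\<Sum>i\<in>F. cnj (c i) * G i x) = cnj s"
    by (simp add: s_def cnj_sum mult.commute)
  then have "qform (insert x F) G c' = cnj t * t * a + cnj t * s + t * cnj s + qform F G c"
    using F by (simp add: qform_insert a_def s_def c'_F qform_cong[of F c' c] cong: sum.cong)
    (simp add: c'_def)
  also have "\<dots> = qform F G c - cnj s * s / a"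
    using a_real by (cases "a = 0") (simp_all add: t_def field_simps)
  also have "\<dots> = qform F (\<lambda>i j. G i j - cnj (G x i) * G x j / G x x) c"
  proof -
    have "(\<Sum>i\<in>F. \<Sum>j\<in>F. cnj (c i * G x i) * (c j * G x j)) = cnj s * s"
      by (simp add: s_def sum_product cnj_sum)
    then show ?thesis
      by (simp add: qform_def a_def algebra_simps sum_subtractf flip: sum_divide_distrib)
  qed
  finally show "Im (qform F (\<lambda>i j. G i j - cnj (G x i) * G x j / G x x) c) = 0 \<and>
      0 \<le> Re (qform F (\<lambda>i j. G i j - cnj (G x i) * G x j / G x x) c)"
    using psd unfolding psd_on_def by metis
qed

lemma psd_on_gram_factorization:
  assumes "finite I" "psd_on I G"
  shows "\<exists>w. \<forall>i\<in>I. \<forall>j\<in>I. (\<Sum>k\<in>I. cnj (w i k) * w j k) = G i j"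
  using assms
proof (induction I arbitrary: G rule: finite_induct)
  case (insert x F)
  note psd = insert.prems
  have fin: "finite (insert x F)" using insert.hyps by simp
  define a where "a = G x x"
  define r where "r = complex_of_real (sqrt (Re a))"
  have r_real: "cnj r = r" by (simp add: r_def)
  have r_sq: "r * r = a"
    using psd_on_diag[OF psd fin insertI1]
    by (simp add: r_def a_def complex_eq_iff power2_eq_square[symmetric])
  obtain w' where w': "\<And>i j. i \<in> F \<Longrightarrow> j \<in> F \<Longrightarrow>
      (\<Sum>k\<in>F. cnj (w' i k) * w' j k) = G i j - cnj (G x i) * G x j / a"
    using insert.IH[OF psd_on_schur_complement[OF psd insert.hyps]] unfolding a_def by blast
  \<comment> \<open>One Cholesky step: column x is (G x i / sqrt (G x x))_i, the others factor the Schur complement.\<close>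
  define w where "w i k = (if k = x then (if i = x then r else G x i / r)
      else if i = x then 0 else w' i k)" for i k
  have herm: "G i j = cnj (G j i)" if "i \<in> insert x F" "j \<in> insert x F" for i j
    by (rule psd_on_hermitian[OF psd fin that])
  have zero_row: "G x j = 0" if "a = 0" "j \<in> insert x F" for j
    using psd_on_zero_row[OF psd fin insertI1 that(2)] that(1) by (simp add: a_def)
  have "(\<Sum>k\<in>insert x F. cnj (w i k) * w j k) = G i j" if "i \<in> insert x F" "j \<in> insert x F" for i j
  proof -
    have "(\<Sum>k\<in>F. cnj (w i k) * w j k) = (\<Sum>k\<in>F. if i = x \<or> j = x then 0 else cnj (w' i k) * w' j k)"
      using insert.hyps by (intro sum.cong) (auto simp: w_def)
    then have "(\<Sum>k\<in>F. cnj (w i k) * w j k) = (if i = x \<or> j = x then 0 else G i j - cnj (G x i) * G x j / a)"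
      using that w' by auto
    then have "(\<Sum>k\<in>insert x F. cnj (w i k) * w j k) =
        cnj (w i x) * w j x + (if i = x \<or> j = x then 0 else G i j - cnj (G x i) * G x j / a)"
      using insert.hyps by simp
    also have "\<dots> = G i j"
      using that r_real r_sq herm[OF that] herm[OF that(2,1)] zero_row
      by (cases "a = 0") (auto simp: w_def a_def field_simps)
    finally show ?thesis .
  qed
  then show ?case by blast
qed simp

lemma qform_gram:
  assumes "\<And>i j. i \<in> I \<Longrightarrow> j \<in> I \<Longrightarrow> G i j = (\<Sum>k\<in>K. cnj (w i k) * w j k)"
  shows "qform I G c = complex_of_real (\<Sum>k\<in>K. (cmod (\<Sum>i\<in>I. c i * w i k))\<^sup>2)"
proof -
  have "qform I G c = (\<Sum>i\<in>I. \<Sum>j\<in>I. \<Sum>k\<in>K. cnj (c i * w i k) * (c j * w j k))"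
    unfolding qform_def using assms by (intro sum.cong refl) (simp add: sum_distrib_left mult_ac)
  also have "\<dots> = (\<Sum>k\<in>K. cnj (\<Sum>i\<in>I. c i * w i k) * (\<Sum>j\<in>I. c j * w j k))"
    by (simp add: cnj_sum sum_product sum.swap[of _ K])
  also have "\<dots> = complex_of_real (\<Sum>k\<in>K. (cmod (\<Sum>i\<in>I. c i * w i k))\<^sup>2)"
    by (simp add: complex_norm_square mult.commute del: of_real_power)
  finally show ?thesis .
qed

section \<open>The translation representation and admissible constants\<close>

lemma sum_sum_norm_diff_sq:
  fixes z :: "'i \<Rightarrow> 'a::real_inner"
  assumes "finite S" "S \<noteq> {}"
  defines "m \<equiv> scaleR (1 / real (card S)) (\<Sum>h\<in>S. z h)"
  shows "(\<Sum>g\<in>S. \<Sum>h\<in>S. (norm (z g - z h))\<^sup>2) = 2 * real (card S) * (\<Sum>g\<in>S. (norm (z g - m))\<^sup>2)"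
proof -
  define y where "y g = z g - m" for g
  have n_pos: "real (card S) > 0" using assms(1,2) by (simp add: card_gt_0_iff)
  have sum_y: "(\<Sum>g\<in>S. y g) = 0"
    using n_pos by (simp add: y_def sum_subtractf m_def sum_constant_scaleR)
  have "(\<Sum>g\<in>S. \<Sum>h\<in>S. (norm (z g - z h))\<^sup>2) = (\<Sum>g\<in>S. \<Sum>h\<in>S. inner (y g - y h) (y g - y h))"
    by (simp add: y_def power2_norm_eq_inner)
  also have "\<dots> = 2 * real (card S) * (\<Sum>g\<in>S. inner (y g) (y g)) - 2 * inner (\<Sum>g\<in>S. y g) (\<Sum>h\<in>S. y h)"
    by (simp add: inner_diff_left inner_diff_right inner_sum_left inner_sum_right inner_commute
        sum_subtractf sum.distrib sum_distrib_left[symmetric] algebra_simps)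
  also have "\<dots> = 2 * real (card S) * (\<Sum>g\<in>S. (norm (z g - m))\<^sup>2)"
    by (simp only: sum_y inner_zero_left mult_zero_right diff_zero) (simp add: y_def power2_norm_eq_inner)
  finally show ?thesis .
qed

definition orthonormal_on :: "'j set \<Rightarrow> ('j \<Rightarrow> 'h::complex_inner) \<Rightarrow> bool" where
  "orthonormal_on J u \<longleftrightarrow> (\<forall>i\<in>J. \<forall>j\<in>J. cinner (u i) (u j) = (if i = j then 1 else 0))"

definition span_proj :: "'j set \<Rightarrow> ('j \<Rightarrow> 'h::complex_inner) \<Rightarrow> 'h \<Rightarrow> 'h" where
  "span_proj J u \<xi> = (\<Sum>j\<in>J. scaleC (cinner (u j) \<xi>) (u j))"

lemma orth_proj_eqI:
  assumes diff_closed: "\<And>x y. x \<in> S \<Longrightarrow> y \<in> S \<Longrightarrow> x - y \<in> S"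
    and "p \<in> S" and orth: "\<And>s. s \<in> S \<Longrightarrow> cinner s (\<xi> - p) = 0"
  shows "orth_proj S (\<xi>::'h::complex_inner) = p"
  unfolding orth_proj_def
proof (rule the_equality)
  show "p \<in> S \<and> (\<forall>s\<in>S. cinner s (\<xi> - p) = 0)" using assms(2) orth by blast
  fix p' assume p': "p' \<in> S \<and> (\<forall>s\<in>S. cinner s (\<xi> - p') = 0)"
  then have "p - p' \<in> S" using diff_closed assms(2) by blast
  then have "cinner (p - p') ((\<xi> - p') - (\<xi> - p)) = 0"
    using p' orth by (simp add: cinner_diff_right)
  then show "p' = p" by (simp add: cinner_eq_zero_iff)
qed

lemma orthonormal_on_exists:
  assumes "finite J" "infinite_dimensional TYPE('h::complex_inner)"
  shows "\<exists>u :: 'j \<Rightarrow> 'h. orthonormal_on J u"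
  using assms(1)
proof (induction J rule: finite_induct)
  case empty then show ?case by (simp add: orthonormal_on_def)
next
  case (insert x F)
  then obtain u :: "'j \<Rightarrow> 'h" where u: "orthonormal_on F u" by blast
  obtain v :: 'h where v: "v \<noteq> 0" "\<forall>s\<in>u ` F. cinner s v = 0"
    using assms(2) insert.hyps(1) unfolding infinite_dimensional_def by blast
  define e where "e = scaleR (1 / norm v) v"
  have "cinner e e = 1"
    using v(1) by (simp add: e_def cinner_self)
  moreover have "cinner (u i) e = 0" if "i \<in> F" for i
    using v(2) that by (simp add: e_def scaleR_scaleC cinner_scaleC_right)
  moreover have "cinner e (u i) = 0" if "i \<in> F" for i
    using calculation(2)[OF that] by (metis cinner_cnj_commute complex_cnj_zero)
  ultimately have "orthonormal_on (insert x F) (u(x := e))"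
    using u insert.hyps(2) unfolding orthonormal_on_def by auto
  then show ?case by blast
qed

context
  fixes J :: "'j set" and u :: "'j \<Rightarrow> 'h::complex_inner"
  assumes orthonormal: "orthonormal_on J u" and finite_J: "finite J"
begin

lemma cinner_orthonormal_sum:
  assumes "i \<in> J"
  shows "cinner (u i) (\<Sum>j\<in>J. scaleC (d j) (u j)) = d i"
proof -
  have "cinner (u i) (\<Sum>j\<in>J. scaleC (d j) (u j)) = (\<Sum>j\<in>J. d j * (if i = j then 1 else 0))"
    using orthonormal assms unfolding orthonormal_on_def
    by (simp add: cinner_sum_right cinner_scaleC_right)
  then show ?thesis using finite_J assms by (simp add: if_distrib cong: if_cong)
qed

lemma norm_orthonormal_sum: "(norm (\<Sum>j\<in>J. scaleC (d j) (u j)))\<^sup>2 = (\<Sum>j\<in>J. (cmod (d j))\<^sup>2)"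
proof -
  have "cinner (\<Sum>j\<in>J. scaleC (d j) (u j)) (\<Sum>j\<in>J. scaleC (d j) (u j)) = (\<Sum>j\<in>J. cnj (d j) * d j)"
    by (simp add: cinner_sum_left cinner_scaleC_left cinner_orthonormal_sum)
  also have "\<dots> = complex_of_real (\<Sum>j\<in>J. (cmod (d j))\<^sup>2)"
    by (simp add: complex_norm_square mult.commute del: of_real_power)
  finally show ?thesis by (simp add: power2_norm_eq_cinner)
qed

lemma cinner_span_proj: "i \<in> J \<Longrightarrow> cinner (u i) (span_proj J u \<xi>) = cinner (u i) \<xi>"
  unfolding span_proj_def by (rule cinner_orthonormal_sum)

lemma norm_sq_span_proj_split:
  "(norm \<xi>)\<^sup>2 = (norm (\<xi> - span_proj J u \<xi>))\<^sup>2 + (\<Sum>j\<in>J. (cmod (cinner (u j) \<xi>))\<^sup>2)"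
proof -
  have "cinner (span_proj J u \<xi>) (\<xi> - span_proj J u \<xi>) = 0"
    by (simp add: span_proj_def cinner_sum_left cinner_scaleC_left cinner_diff_right
        cinner_span_proj[unfolded span_proj_def])
  from pythagoras_cinner[OF this] show ?thesis
    by (simp add: span_proj_def norm_orthonormal_sum)
qed

lemma eq_if_span_proj_eq:
  assumes "\<xi> - span_proj J u \<xi> = \<eta> - span_proj J u \<eta>" "\<And>j. j \<in> J \<Longrightarrow> cinner (u j) \<xi> = cinner (u j) \<eta>"
  shows "\<xi> = \<eta>"
proof -
  have "span_proj J u \<xi> = span_proj J u \<eta>" unfolding span_proj_def using assms(2) by simp
  then show ?thesis using assms(1) by (metis diff_add_cancel)
qed

end

definition translation_rep ::
    "('a, 'c) monoid_scheme \<Rightarrow> 'k set \<Rightarrow> ('a \<times> 'k \<Rightarrow> 'h::complex_inner) \<Rightarrow> 'a \<Rightarrow> 'h \<Rightarrow> 'h" where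
  "translation_rep G K u a \<xi> = \<xi> - span_proj (carrier G \<times> K) u \<xi> +
     (\<Sum>j\<in>carrier G \<times> K. scaleC (cinner (u j) \<xi>) (u (a \<otimes>\<^bsub>G\<^esub> fst j, snd j)))"

definition grid_vector ::
    "('a, 'c) monoid_scheme \<Rightarrow> 'k set \<Rightarrow> ('a \<times> 'k \<Rightarrow> 'h::complex_inner) \<Rightarrow> ('a \<Rightarrow> 'k \<Rightarrow> complex) \<Rightarrow> 'h" where
  "grid_vector G K u w = (\<Sum>j\<in>carrier G \<times> K. scaleC (w (fst j) (snd j)) (u j))"

locale orthonormal_grid = group G for G (structure) +
  fixes K :: "'k set" and u :: "'a \<times> 'k \<Rightarrow> 'h::complex_inner"
  assumes finite_carrier: "finite (carrier G)" and finite_K: "finite K"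
    and orthonormal: "orthonormal_on (carrier G \<times> K) u"
begin

abbreviation "\<pi> \<equiv> translation_rep G K u"

abbreviation "P \<equiv> span_proj (carrier G \<times> K) u"

lemma finite_grid: "finite (carrier G \<times> K)"
  using finite_carrier finite_K by simp

lemma cinner_translation_rep:
  assumes "a \<in> carrier G" "g \<in> carrier G" "k \<in> K"
  shows "cinner (u (g, k)) (\<pi> a \<xi>) = cinner (u (inv a \<otimes> g, k)) \<xi>"
proof -
  have delta: "cinner (u (g, k)) (u (a \<otimes> fst j, snd j)) = (if j = (inv a \<otimes> g, k) then 1 else 0)"
    if j: "j \<in> carrier G \<times> K" for j
  proof -
    have "(g, k) = (a \<otimes> fst j, snd j) \<longleftrightarrow> j = (inv a \<otimes> g, k)"
      using j assms by (auto simp: inv_solve_left m_assoc[symmetric])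
    then show ?thesis
      using orthonormal[unfolded orthonormal_on_def, rule_format, of "(g, k)" "(a \<otimes> fst j, snd j)"]
        j assms by auto
  qed
  have "(\<Sum>j\<in>carrier G \<times> K. cinner (u (g, k)) (scaleC (cinner (u j) \<xi>) (u (a \<otimes> fst j, snd j))))
      = (\<Sum>j\<in>carrier G \<times> K. if j = (inv a \<otimes> g, k) then cinner (u j) \<xi> else 0)"
    by (intro sum.cong refl) (simp add: cinner_scaleC_right delta)
  also have "\<dots> = cinner (u (inv a \<otimes> g, k)) \<xi>"
    using finite_grid assms by simp
  finally show ?thesis
    using assms unfolding translation_rep_def
    by (simp add: cinner_add_right cinner_diff_right cinner_sum_right
        cinner_span_proj[OF orthonormal finite_grid])
qed

lemma sum_grid_translate:
  assumes "a \<in> carrier G"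
  shows "(\<Sum>j\<in>carrier G \<times> K. f (inv a \<otimes> fst j, snd j) j) = (\<Sum>j\<in>carrier G \<times> K. f j (a \<otimes> fst j, snd j))"
  by (rule sum.reindex_bij_witness[where i = "\<lambda>j. (a \<otimes> fst j, snd j)" and j = "\<lambda>j. (inv a \<otimes> fst j, snd j)"])
     (use assms in \<open>auto simp: m_assoc[symmetric]\<close>)

lemma translation_rep_complement:
  assumes "a \<in> carrier G"
  shows "\<pi> a \<xi> - P (\<pi> a \<xi>) = \<xi> - P \<xi>"
proof -
  have "P (\<pi> a \<xi>) = (\<Sum>j\<in>carrier G \<times> K. scaleC (cinner (u (inv a \<otimes> fst j, snd j)) \<xi>) (u j))"
    unfolding span_proj_def by (intro sum.cong) (auto simp: cinner_translation_rep assms)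
  also have "\<dots> = (\<Sum>j\<in>carrier G \<times> K. scaleC (cinner (u j) \<xi>) (u (a \<otimes> fst j, snd j)))"
    using sum_grid_translate[OF assms, of "\<lambda>j j'. scaleC (cinner (u j) \<xi>) (u j')"] by simp
  finally show ?thesis unfolding translation_rep_def by simp
qed

lemma translation_rep_eqI:
  assumes "\<xi> - P \<xi> = \<eta> - P \<eta>"
    and "\<And>g k. g \<in> carrier G \<Longrightarrow> k \<in> K \<Longrightarrow> cinner (u (g, k)) \<xi> = cinner (u (g, k)) \<eta>"
  shows "\<xi> = \<eta>"
  by (rule eq_if_span_proj_eq[OF orthonormal finite_grid assms(1)]) (use assms(2) in auto)

lemma clinear_translation_rep: "clinear_map (\<pi> a)"
  unfolding clinear_map_def translation_rep_def span_proj_def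
  by (simp add: cinner_add_right cinner_scaleC_right scaleC_add_left scaleC_add_right
      scaleC_diff_right scaleC_sum_right scaleC_scaleC sum.distrib algebra_simps)

lemma norm_translation_rep:
  assumes "a \<in> carrier G"
  shows "norm (\<pi> a \<xi>) = norm \<xi>"
proof -
  have "(\<Sum>j\<in>carrier G \<times> K. (cmod (cinner (u j) (\<pi> a \<xi>)))\<^sup>2) =
      (\<Sum>j\<in>carrier G \<times> K. (cmod (cinner (u (inv a \<otimes> fst j, snd j)) \<xi>))\<^sup>2)"
    by (intro sum.cong) (auto simp: cinner_translation_rep assms)
  also have "\<dots> = (\<Sum>j\<in>carrier G \<times> K. (cmod (cinner (u j) \<xi>))\<^sup>2)"
    using sum_grid_translate[OF assms, of "\<lambda>j j'. (cmod (cinner (u j) \<xi>))\<^sup>2"] by simp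
  finally have "(norm (\<pi> a \<xi>))\<^sup>2 = (norm \<xi>)\<^sup>2"
    using norm_sq_span_proj_split[OF orthonormal finite_grid]
    by (metis translation_rep_complement[OF assms])
  then show ?thesis by (simp add: power2_eq_iff_nonneg)
qed

lemma translation_rep_mult:
  assumes "a \<in> carrier G" "b \<in> carrier G"
  shows "\<pi> (a \<otimes> b) = \<pi> a \<circ> \<pi> b"
proof
  fix \<xi>
  show "\<pi> (a \<otimes> b) \<xi> = (\<pi> a \<circ> \<pi> b) \<xi>"
    by (rule translation_rep_eqI)
      (use assms in \<open>simp_all add: translation_rep_complement cinner_translation_rep inv_mult_group m_assoc\<close>)
qed

lemma translation_rep_one: "\<pi> \<one> \<xi> = \<xi>"
  by (rule translation_rep_eqI) (simp_all add: translation_rep_complement cinner_translation_rep)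

lemma unitary_rep_translation_rep: "unitary_rep G \<pi>"
  unfolding unitary_rep_def
proof (intro conjI ballI)
  fix a assume a: "a \<in> carrier G"
  have "surj (\<pi> a)"
  proof (rule surjI)
    show "\<pi> a (\<pi> (inv a) \<xi>) = \<xi>" for \<xi>
      using translation_rep_mult[of a "inv a"] a translation_rep_one by (simp add: fun_eq_iff)
  qed
  then show "unitary_op (\<pi> a)"
    unfolding unitary_op_def using clinear_translation_rep norm_translation_rep[OF a] by blast
qed (rule translation_rep_mult)

lemma cinner_grid_vector: "g \<in> carrier G \<Longrightarrow> k \<in> K \<Longrightarrow> cinner (u (g, k)) (grid_vector G K u w) = w g k"
  unfolding grid_vector_def
  using cinner_orthonormal_sum[OF orthonormal finite_grid, of "(g, k)" "\<lambda>j. w (fst j) (snd j)"] by simp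

lemma grid_vector_complement: "grid_vector G K u w - P (grid_vector G K u w) = 0"
proof -
  have "P (grid_vector G K u w) = grid_vector G K u w"
    unfolding span_proj_def by (subst (2) grid_vector_def) (intro sum.cong, auto simp: cinner_grid_vector)
  then show ?thesis by simp
qed

lemma translation_rep_grid_vector:
  assumes "a \<in> carrier G"
  shows "\<pi> a (grid_vector G K u w) = grid_vector G K u (\<lambda>g k. w (inv a \<otimes> g) k)"
  by (rule translation_rep_eqI)
    (use assms in \<open>simp_all add: translation_rep_complement grid_vector_complement
      cinner_translation_rep cinner_grid_vector\<close>)

lemma grid_vector_diff: "grid_vector G K u w - grid_vector G K u w' = grid_vector G K u (\<lambda>g k. w g k - w' g k)"
  unfolding grid_vector_def by (simp add: scaleC_diff_left sum_subtractf)

lemma norm_grid_vector: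
  "(norm (grid_vector G K u w))\<^sup>2 = (\<Sum>g\<in>carrier G. \<Sum>k\<in>K. (cmod (w g k))\<^sup>2)"
  unfolding grid_vector_def norm_orthonormal_sum[OF orthonormal finite_grid]
  by (simp add: sum.cartesian_product case_prod_beta')

lemma cinner_invariant_vector:
  assumes "\<zeta> \<in> invariant_vectors G \<pi>" "g \<in> carrier G" "k \<in> K"
  shows "cinner (u (g, k)) \<zeta> = cinner (u (\<one>, k)) \<zeta>"
proof -
  have "\<pi> (inv g) \<zeta> = \<zeta>" using assms unfolding invariant_vectors_def by simp
  then have "cinner (u (\<one>, k)) \<zeta> = cinner (u (\<one>, k)) (\<pi> (inv g) \<zeta>)" by simp
  also have "\<dots> = cinner (u (g, k)) \<zeta>" using assms by (simp add: cinner_translation_rep)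
  finally show ?thesis by simp
qed

lemma cinner_invariant_grid_vector:
  assumes "\<zeta> \<in> invariant_vectors G \<pi>" and mean_zero: "\<And>k. (\<Sum>g\<in>carrier G. v g k) = 0"
  shows "cinner \<zeta> (grid_vector G K u v) = 0"
proof -
  have "cinner \<zeta> (grid_vector G K u v) = (\<Sum>j\<in>carrier G \<times> K. v (fst j) (snd j) * cinner \<zeta> (u j))"
    by (simp add: grid_vector_def cinner_sum_right cinner_scaleC_right)
  also have "\<dots> = (\<Sum>j\<in>carrier G \<times> K. v (fst j) (snd j) * cnj (cinner (u (\<one>, snd j)) \<zeta>))"
  proof (intro sum.cong refl)
    fix j assume "j \<in> carrier G \<times> K"
    then obtain g k where "j = (g, k)" "g \<in> carrier G" "k \<in> K" by blast
    then show "v (fst j) (snd j) * cinner \<zeta> (u j) = v (fst j) (snd j) * cnj (cinner (u (\<one>, snd j)) \<zeta>)"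
      using cinner_invariant_vector[OF assms(1), of g k] by (simp add: cinner_cnj_commute[of \<zeta>])
  qed
  also have "\<dots> = (\<Sum>g\<in>carrier G. \<Sum>k\<in>K. v g k * cnj (cinner (u (\<one>, k)) \<zeta>))"
    by (simp add: sum.cartesian_product case_prod_beta')
  also have "\<dots> = (\<Sum>k\<in>K. (\<Sum>g\<in>carrier G. v g k) * cnj (cinner (u (\<one>, k)) \<zeta>))"
    by (simp add: sum.swap[of _ "carrier G" K] sum_distrib_right)
  finally show ?thesis by (simp add: mean_zero)
qed

lemma orth_proj_grid_vector:
  fixes w :: "'a \<Rightarrow> 'k \<Rightarrow> complex"
  defines "m \<equiv> \<lambda>k. scaleR (1 / real (card (carrier G))) (\<Sum>g\<in>carrier G. w g k)"
  shows "orth_proj (invariant_vectors G \<pi>) (grid_vector G K u w) = grid_vector G K u (\<lambda>g. m)"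
proof (rule orth_proj_eqI)
  show "x - y \<in> invariant_vectors G \<pi>" if "x \<in> invariant_vectors G \<pi>" "y \<in> invariant_vectors G \<pi>" for x y
    using that unfolding invariant_vectors_def by (simp add: clinear_map_diff[OF clinear_translation_rep])
  show "grid_vector G K u (\<lambda>g. m) \<in> invariant_vectors G \<pi>"
    unfolding invariant_vectors_def by (simp add: translation_rep_grid_vector)
  have "(\<Sum>g\<in>carrier G. w g k - m k) = 0" for k
    using finite_carrier by (simp add: sum_subtractf m_def card_gt_0_iff scaleR_conv_of_real)
  then show "cinner \<zeta> (grid_vector G K u w - grid_vector G K u (\<lambda>g. m)) = 0"
    if "\<zeta> \<in> invariant_vectors G \<pi>" for \<zeta>
    unfolding grid_vector_diff by (rule cinner_invariant_grid_vector[OF that])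
qed

end

definition kappa_admissible ::
    "'h::chilbert_space itself \<Rightarrow> ('g, 'z) monoid_scheme \<Rightarrow> ('g \<Rightarrow> real) \<Rightarrow> real \<Rightarrow> bool" where
  "kappa_admissible _ G \<mu> k \<longleftrightarrow> (\<forall>\<pi> :: 'g \<Rightarrow> 'h \<Rightarrow> 'h. unitary_rep G \<pi> \<longrightarrow> (\<forall>\<xi>.
     (norm (\<xi> - orth_proj (invariant_vectors G \<pi>) \<xi>))\<^sup>2
       \<le> k / 2 * (\<Sum>g\<in>carrier G. \<mu> g * (norm (\<pi> g \<xi> - \<xi>))\<^sup>2)))"

lemma kappa_eq_Inf_admissible:
  "kappa TYPE('h::chilbert_space) G \<mu> = Inf {ennreal k | k. k \<ge> 0 \<and> kappa_admissible TYPE('h) G \<mu> k}"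
  unfolding kappa_def kappa_admissible_def ..

lemma le_enn2real_Inf_mult:
  assumes finite: "Inf {ennreal k | k. k \<ge> 0 \<and> Q k} \<noteq> Orderings.top"
    and bound: "\<And>k. k \<ge> 0 \<Longrightarrow> Q k \<Longrightarrow> E \<le> k * S" and "S \<ge> 0"
  shows "E \<le> enn2real (Inf {ennreal k | k. k \<ge> 0 \<and> Q k}) * S"
proof -
  define K where "K = Inf {ennreal k | k. k \<ge> 0 \<and> Q k}"
  have "{ennreal k | k. k \<ge> 0 \<and> Q k} \<noteq> {}" using finite by force
  then obtain k0 where k0: "k0 \<ge> 0" "Q k0" by blast
  show ?thesis
  proof (cases "S = 0")
    case True then show ?thesis using bound[OF k0] by simp
  next
    case False
    then have S_pos: "S > 0" using assms(3) by simp
    have "ennreal (E / S) \<le> K"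
      unfolding K_def
    proof (rule Inf_greatest)
      fix x assume "x \<in> {ennreal k | k. k \<ge> 0 \<and> Q k}"
      then obtain k where "x = ennreal k" "k \<ge> 0" "Q k" by blast
      then show "ennreal (E / S) \<le> x"
        using bound S_pos by (simp add: ennreal_leI pos_divide_le_eq)
    qed
    moreover have "K < Orderings.top" using finite unfolding K_def top.not_eq_extremum .
    ultimately have "E / S \<le> enn2real K"
      using enn2real_mono[of "ennreal (E / S)" K] enn2real_nonneg[of K]
      by (cases "E / S \<le> 0") (linarith, simp)
    then show ?thesis using S_pos by (simp add: K_def pos_divide_le_eq)
  qed
qed

text \<open>Test admissibility on the translation representation and the vector with coordinates w.\<close>

lemma kappa_admissible_sum_sq_dist:
  fixes G :: "('a, 'c) monoid_scheme" and w :: "'a \<Rightarrow> 'k \<Rightarrow> complex"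
  assumes "group G" "finite (carrier G)" "finite K"
    and "infinite_dimensional TYPE('h::chilbert_space)" "kappa_admissible TYPE('h) G \<mu> C"
  shows "(\<Sum>g\<in>carrier G. \<Sum>h\<in>carrier G. \<Sum>k\<in>K. (cmod (w g k - w h k))\<^sup>2)
    \<le> real (card (carrier G)) * C *
      (\<Sum>a\<in>carrier G. \<mu> a * (\<Sum>g\<in>carrier G. \<Sum>k\<in>K. (cmod (w (inv\<^bsub>G\<^esub> a \<otimes>\<^bsub>G\<^esub> g) k - w g k))\<^sup>2))"
proof -
  obtain u :: "'a \<times> 'k \<Rightarrow> 'h" where u: "orthonormal_on (carrier G \<times> K) u"
    using orthonormal_on_exists[OF finite_cartesian_product[OF assms(2,3)] assms(4)] by blast
  interpret orthonormal_grid G K u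
    by (intro orthonormal_grid.intro orthonormal_grid_axioms.intro assms(1-3) u)
  define n where "n = real (card (carrier G))"
  have n_pos: "n > 0" using assms(2) by (auto simp: n_def card_gt_0_iff)
  define m where "m k = scaleR (1 / n) (\<Sum>g\<in>carrier G. w g k)" for k
  define \<xi> where "\<xi> = grid_vector G K u w"
  let ?P = "orth_proj (invariant_vectors G (translation_rep G K u))"
  have "(norm (\<xi> - ?P \<xi>))\<^sup>2
      \<le> C / 2 * (\<Sum>a\<in>carrier G. \<mu> a * (norm (translation_rep G K u a \<xi> - \<xi>))\<^sup>2)"
    using assms(5) unitary_rep_translation_rep unfolding kappa_admissible_def by blast
  also have "\<dots> = C / 2 * (\<Sum>a\<in>carrier G. \<mu> a *
      (\<Sum>g\<in>carrier G. \<Sum>k\<in>K. (cmod (w (inv\<^bsub>G\<^esub> a \<otimes>\<^bsub>G\<^esub> g) k - w g k))\<^sup>2))"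
    by (intro arg_cong[where f = "(*) (C / 2)"] sum.cong refl)
      (simp add: \<xi>_def translation_rep_grid_vector grid_vector_diff norm_grid_vector)
  also have "(norm (\<xi> - ?P \<xi>))\<^sup>2 = (\<Sum>k\<in>K. \<Sum>g\<in>carrier G. (norm (w g k - m k))\<^sup>2)"
    by (simp add: \<xi>_def orth_proj_grid_vector grid_vector_diff norm_grid_vector m_def n_def
        sum.swap[of _ "carrier G"])
  also have "\<dots> = (\<Sum>k\<in>K. (\<Sum>g\<in>carrier G. \<Sum>h\<in>carrier G. (cmod (w g k - w h k))\<^sup>2) / (2 * n))"
  proof (intro sum.cong refl)
    fix k
    have "carrier G \<noteq> {}" using n_pos by (auto simp: n_def)
    then show "(\<Sum>g\<in>carrier G. (norm (w g k - m k))\<^sup>2) =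
        (\<Sum>g\<in>carrier G. \<Sum>h\<in>carrier G. (cmod (w g k - w h k))\<^sup>2) / (2 * n)"
      using sum_sum_norm_diff_sq[of "carrier G" "\<lambda>g. w g k"] assms(2) n_pos
      by (simp add: m_def n_def)
  qed
  finally show ?thesis
    using n_pos unfolding n_def by (simp add: sum.swap[of _ K] sum.swap[of _ K "carrier G"] field_simps
        flip: sum_divide_distrib)
qed

section \<open>Tracial von Neumann algebras\<close>

locale tracial_von_neumann_algebra =
  fixes M :: "('k::chilbert_space \<Rightarrow> 'k) set" and \<tau> :: "('k \<Rightarrow> 'k) \<Rightarrow> complex"
  assumes von_neumann: "von_neumann_algebra M" and trace: "normal_faithful_tracial_state M \<tau>"
begin

lemma bounded_op_of_in: "x \<in> M \<Longrightarrow> bounded_op x"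
  using von_neumann unfolding von_neumann_algebra_def by blast

lemma adj_in: "x \<in> M \<Longrightarrow> adj x \<in> M"
  using von_neumann unfolding von_neumann_algebra_def by blast

lemma has_adj_of_in: "x \<in> M \<Longrightarrow> has_adj x (adj x)"
  by (simp add: bounded_op_has_adj bounded_op_of_in)

lemma in_bicommutantI:
  assumes "bounded_op x" "\<And>s. s \<in> commutant M \<Longrightarrow> s \<circ> x = x \<circ> s"
  shows "x \<in> M"
proof -
  have "x \<in> commutant (commutant M)" using assms unfolding commutant_def by auto
  then show ?thesis using von_neumann unfolding von_neumann_algebra_def by blast
qed

lemma commutant_comm: "x \<in> M \<Longrightarrow> s \<in> commutant M \<Longrightarrow> s \<circ> x = x \<circ> s"
  unfolding commutant_def by blast

lemma commutant_clinear: "s \<in> commutant M \<Longrightarrow> clinear_map s"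
  unfolding commutant_def using bounded_op_clinear by blast

lemma comp_in: "x \<in> M \<Longrightarrow> y \<in> M \<Longrightarrow> x \<circ> y \<in> M"
proof (rule in_bicommutantI)
  assume x: "x \<in> M" and y: "y \<in> M"
  then show "bounded_op (x \<circ> y)" by (simp add: bounded_op_of_in bounded_op_comp)
  show "s \<circ> (x \<circ> y) = x \<circ> y \<circ> s" if "s \<in> commutant M" for s
    using commutant_comm[OF x that] commutant_comm[OF y that] by (metis comp_assoc)
qed

lemma add_in: "x \<in> M \<Longrightarrow> y \<in> M \<Longrightarrow> (\<lambda>v. x v + y v) \<in> M"
proof (rule in_bicommutantI)
  assume x: "x \<in> M" and y: "y \<in> M"
  then show "bounded_op (\<lambda>v. x v + y v)" by (simp add: bounded_op_of_in bounded_op_add)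
  show "s \<circ> (\<lambda>v. x v + y v) = (\<lambda>v. x v + y v) \<circ> s" if s: "s \<in> commutant M" for s
    using commutant_comm[OF x s] commutant_comm[OF y s] commutant_clinear[OF s]
    unfolding clinear_map_def by (simp add: fun_eq_iff)
qed

lemma scaleC_in: "x \<in> M \<Longrightarrow> (\<lambda>v. scaleC c (x v)) \<in> M"
proof (rule in_bicommutantI)
  assume x: "x \<in> M"
  then show "bounded_op (\<lambda>v. scaleC c (x v))" by (simp add: bounded_op_of_in bounded_op_scaleC)
  show "s \<circ> (\<lambda>v. scaleC c (x v)) = (\<lambda>v. scaleC c (x v)) \<circ> s" if s: "s \<in> commutant M" for s
    using commutant_comm[OF x s] commutant_clinear[OF s]
    unfolding clinear_map_def by (simp add: fun_eq_iff)
qed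

lemma zero_in: "(\<lambda>v. 0) \<in> M"
proof (rule in_bicommutantI[OF bounded_op_zero])
  fix s assume "s \<in> commutant M"
  then have "s 0 = 0" using clinear_map_diff[OF commutant_clinear, of s 0 0] by simp
  then show "s \<circ> (\<lambda>v. 0) = (\<lambda>v. 0) \<circ> s" by (simp add: fun_eq_iff)
qed

lemma diff_in: "x \<in> M \<Longrightarrow> y \<in> M \<Longrightarrow> (\<lambda>v. x v - y v) \<in> M"
proof -
  assume "x \<in> M" "y \<in> M"
  then have "(\<lambda>v. x v + scaleC (-1) (y v)) \<in> M" by (intro add_in scaleC_in)
  moreover have "scaleC (-1) z = - z" for z :: 'k
    using scaleC_diff_left[of 0 1 z] by (simp add: scaleC_one)
  ultimately show ?thesis by simp
qed

lemma commutator_in: "x \<in> M \<Longrightarrow> y \<in> M \<Longrightarrow> commutator x y \<in> M"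
  unfolding commutator_def using diff_in[OF comp_in comp_in] by (simp add: comp_def)

lemma lincomb_in:
  "finite I \<Longrightarrow> (\<And>i. i \<in> I \<Longrightarrow> F i \<in> M) \<Longrightarrow> (\<lambda>v. \<Sum>i\<in>I. scaleC (c i) (F i v)) \<in> M"
  by (induction I rule: finite_induct) (simp_all add: zero_in add_in scaleC_in)

lemma trace_add: "x \<in> M \<Longrightarrow> y \<in> M \<Longrightarrow> \<tau> (\<lambda>v. x v + y v) = \<tau> x + \<tau> y"
  using trace unfolding normal_faithful_tracial_state_def by blast

lemma trace_scaleC: "x \<in> M \<Longrightarrow> \<tau> (\<lambda>v. scaleC c (x v)) = c * \<tau> x"
  using trace unfolding normal_faithful_tracial_state_def by blast

lemma trace_adj_comp_self: "x \<in> M \<Longrightarrow> Im (\<tau> (adj x \<circ> x)) = 0 \<and> Re (\<tau> (adj x \<circ> x)) \<ge> 0"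
  using trace unfolding normal_faithful_tracial_state_def by blast

lemma trace_comm: "x \<in> M \<Longrightarrow> y \<in> M \<Longrightarrow> \<tau> (x \<circ> y) = \<tau> (y \<circ> x)"
  using trace unfolding normal_faithful_tracial_state_def by blast

lemma trace_zero: "\<tau> (\<lambda>v. 0) = 0"
  using trace_scaleC[OF zero_in, of 0] by simp

lemma trace_lincomb:
  "finite I \<Longrightarrow> (\<And>i. i \<in> I \<Longrightarrow> F i \<in> M) \<Longrightarrow>
    \<tau> (\<lambda>v. \<Sum>i\<in>I. scaleC (c i) (F i v)) = (\<Sum>i\<in>I. c i * \<tau> (F i))"
  by (induction I rule: finite_induct)
    (simp_all add: trace_zero trace_add[OF scaleC_in lincomb_in] trace_scaleC)

lemma trace_adj_comp_lincomb:
  fixes c :: "'i \<Rightarrow> complex"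
  assumes "finite I" and F: "\<And>i. i \<in> I \<Longrightarrow> F i \<in> M"
  defines "Y \<equiv> \<lambda>v. \<Sum>i\<in>I. scaleC (c i) (F i v)"
  shows "\<tau> (adj Y \<circ> Y) = qform I (\<lambda>i j. \<tau> (adj (F i) \<circ> F j)) c"
proof -
  have adj_Y: "adj Y = (\<lambda>v. \<Sum>i\<in>I. scaleC (cnj (c i)) (adj (F i) v))"
    unfolding Y_def by (intro adj_eqI has_adj_scaleC_sum has_adj_of_in F)
  have "(adj Y \<circ> Y) v = (\<Sum>p\<in>I \<times> I. scaleC (cnj (c (fst p)) * c (snd p)) ((adj (F (fst p)) \<circ> F (snd p)) v))"
    for v
  proof -
    have "(adj Y \<circ> Y) v = (\<Sum>i\<in>I. scaleC (cnj (c i)) (adj (F i) (\<Sum>j\<in>I. scaleC (c j) (F j v))))"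
      unfolding comp_apply adj_Y by (simp add: Y_def)
    also have "\<dots> = (\<Sum>i\<in>I. \<Sum>j\<in>I. scaleC (cnj (c i) * c j) (adj (F i) (F j v)))"
    proof (rule sum.cong[OF refl])
      fix i assume "i \<in> I"
      then have "clinear_map (adj (F i))" using F adj_in bounded_op_clinear bounded_op_of_in by blast
      then show "scaleC (cnj (c i)) (adj (F i) (\<Sum>j\<in>I. scaleC (c j) (F j v))) =
          (\<Sum>j\<in>I. scaleC (cnj (c i) * c j) (adj (F i) (F j v)))"
        by (simp add: clinear_map_sum scaleC_sum_right clinear_map_def scaleC_scaleC)
    qed
    finally show ?thesis by (simp add: sum.cartesian_product case_prod_beta')
  qed
  then have eq: "adj Y \<circ> Y = (\<lambda>v. \<Sum>p\<in>I \<times> I. scaleC (cnj (c (fst p)) * c (snd p)) ((adj (F (fst p)) \<circ> F (snd p)) v))"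
    by (rule ext)
  have mem: "adj (F (fst p)) \<circ> F (snd p) \<in> M" if "p \<in> I \<times> I" for p
    using that by (simp add: comp_in adj_in F mem_Times_iff)
  have "\<tau> (adj Y \<circ> Y) = (\<Sum>p\<in>I \<times> I. cnj (c (fst p)) * c (snd p) * \<tau> (adj (F (fst p)) \<circ> F (snd p)))"
    unfolding eq by (rule trace_lincomb[OF finite_cartesian_product[OF assms(1,1)] mem])
  also have "\<dots> = qform I (\<lambda>i j. \<tau> (adj (F i) \<circ> F j)) c"
    by (simp add: qform_def sum.cartesian_product case_prod_beta')
  finally show ?thesis .
qed

lemma psd_on_gram:
  assumes "finite I" "\<And>i. i \<in> I \<Longrightarrow> F i \<in> M"
  shows "psd_on I (\<lambda>i j. \<tau> (adj (F i) \<circ> F j))"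
  unfolding psd_on_def
proof
  fix c :: "_ \<Rightarrow> complex"
  show "Im (qform I (\<lambda>i j. \<tau> (adj (F i) \<circ> F j)) c) = 0 \<and> 0 \<le> Re (qform I (\<lambda>i j. \<tau> (adj (F i) \<circ> F j)) c)"
    using trace_adj_comp_self[OF lincomb_in[OF assms, where c = c]] by (simp only: trace_adj_comp_lincomb[OF assms])
qed

lemma tnorm2_sq_nonneg: "x \<in> M \<Longrightarrow> tnorm2_sq \<tau> x \<ge> 0"
  unfolding tnorm2_sq_def using trace_adj_comp_self by blast

lemma tnorm2_sq_uminus:
  assumes "C \<in> M"
  shows "tnorm2_sq \<tau> (\<lambda>v. - C v) = tnorm2_sq \<tau> C"
proof -
  have "adj (\<lambda>v. - C v) = (\<lambda>v. - adj C v)"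
    using has_adj_of_in[OF assms]
    by (intro adj_eqI) (simp add: has_adj_def cinner_minus_left cinner_minus_right)
  moreover have "adj C (- x) = - adj C x" for x
    using clinear_map_diff[OF bounded_op_clinear[OF bounded_op_of_in[OF adj_in[OF assms]]], of 0 x]
      clinear_map_diff[OF bounded_op_clinear[OF bounded_op_of_in[OF adj_in[OF assms]]], of 0 0]
    by simp
  ultimately show ?thesis unfolding tnorm2_sq_def by (simp add: comp_def)
qed

lemma tnorm2_sq_commutator_swap:
  "x \<in> M \<Longrightarrow> y \<in> M \<Longrightarrow> tnorm2_sq \<tau> (commutator y x) = tnorm2_sq \<tau> (commutator x y)"
  using tnorm2_sq_uminus[OF commutator_in[of x y]] by (simp add: commutator_def)

lemma tnorm2_sq_unitary_comp:
  assumes V: "unitary_in M V" and W: "unitary_in M W" and C: "C \<in> M"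
  shows "tnorm2_sq \<tau> (V \<circ> C \<circ> W) = tnorm2_sq \<tau> C"
proof -
  have VM: "V \<in> M" "adj V \<circ> V = id" and WM: "W \<in> M" "W \<circ> adj W = id"
    using V W unfolding unitary_in_def by auto
  have "adj (V \<circ> C \<circ> W) = adj W \<circ> (adj C \<circ> adj V)"
    by (intro adj_eqI has_adj_comp has_adj_of_in VM(1) WM(1) C)
  then have "adj (V \<circ> C \<circ> W) \<circ> (V \<circ> C \<circ> W) = adj W \<circ> (adj C \<circ> C \<circ> W)"
    using VM(2) by (simp add: comp_assoc) (metis comp_assoc id_comp)
  then have "\<tau> (adj (V \<circ> C \<circ> W) \<circ> (V \<circ> C \<circ> W)) = \<tau> ((adj C \<circ> C \<circ> W) \<circ> adj W)"
    using trace_comm adj_in comp_in C WM(1) by simp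
  also have "(adj C \<circ> C \<circ> W) \<circ> adj W = adj C \<circ> C"
    using WM(2) by (simp add: comp_assoc)
  finally show ?thesis unfolding tnorm2_sq_def by (rule arg_cong)
qed

lemma gram_points_dist:
  assumes "finite I" and F: "\<And>i. i \<in> I \<Longrightarrow> F i \<in> M"
    and gram: "\<And>i j. i \<in> I \<Longrightarrow> j \<in> I \<Longrightarrow> (\<Sum>k\<in>K. cnj (w i k) * w j k) = \<tau> (adj (F i) \<circ> F j)"
    and "g \<in> I" "h \<in> I"
  shows "(\<Sum>k\<in>K. (cmod (w g k - w h k))\<^sup>2) = tnorm2_sq \<tau> (\<lambda>v. F g v - F h v)"
proof -
  define c :: "_ \<Rightarrow> complex" where "c i = (if i = g then 1 else 0) - (if i = h then 1 else 0)" for i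
  have scaleC_c: "scaleC (c i) x = (if i = g then x else 0) - (if i = h then x else 0)" for i x
    by (simp add: c_def scaleC_diff_left scaleC_one)
  have "(\<Sum>i\<in>I. scaleC (c i) (F i v)) = F g v - F h v" for v
    unfolding scaleC_c using assms(1,4,5) by (simp add: sum_subtractf)
  then have lincomb: "(\<lambda>v. \<Sum>i\<in>I. scaleC (c i) (F i v)) = (\<lambda>v. F g v - F h v)" by (rule ext)
  have coords: "(\<Sum>i\<in>I. c i * w i k) = w g k - w h k" for k
  proof -
    have "c i * z = (if i = g then z else 0) - (if i = h then z else 0)" for i z
      by (simp add: c_def left_diff_distrib)
    then show ?thesis using assms(1,4,5) by (simp add: sum_subtractf)
  qed
  have "tnorm2_sq \<tau> (\<lambda>v. F g v - F h v) = Re (qform I (\<lambda>i j. \<tau> (adj (F i) \<circ> F j)) c)"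
    unfolding tnorm2_sq_def lincomb[symmetric] by (simp only: trace_adj_comp_lincomb[OF assms(1) F])
  also have "qform I (\<lambda>i j. \<tau> (adj (F i) \<circ> F j)) c
      = complex_of_real (\<Sum>k\<in>K. (cmod (\<Sum>i\<in>I. c i * w i k))\<^sup>2)"
    by (rule qform_gram) (simp add: gram)
  finally show ?thesis by (simp add: coords)
qed


lemma exists_gram_coordinates:
  assumes "finite I" and F: "\<And>i. i \<in> I \<Longrightarrow> F i \<in> M"
  shows "\<exists>w. \<forall>g\<in>I. \<forall>h\<in>I. (\<Sum>k\<in>I. (cmod (w g k - w h k))\<^sup>2) = tnorm2_sq \<tau> (\<lambda>v. F g v - F h v)"
proof -
  have "psd_on I (\<lambda>i j. \<tau> (adj (F i) \<circ> F j))"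
    by (rule psd_on_gram[OF assms])
  from psd_on_gram_factorization[OF assms(1) this] obtain w
    where "\<forall>i\<in>I. \<forall>j\<in>I. (\<Sum>k\<in>I. cnj (w i k) * w j k) = \<tau> (adj (F i) \<circ> F j)"
    by (elim exE)
  then have "\<forall>g\<in>I. \<forall>h\<in>I. (\<Sum>k\<in>I. (cmod (w g k - w h k))\<^sup>2) = tnorm2_sq \<tau> (\<lambda>v. F g v - F h v)"
    using gram_points_dist[where I = I and F = F and w = w and K = I, OF assms] by blast
  then show ?thesis by blast
qed
end

lemma (in group) sum_reindex_inv_mult:
  assumes "h \<in> carrier G"
  shows "(\<Sum>g\<in>carrier G. f g) = (\<Sum>a\<in>carrier G. f (inv a \<otimes> h))"
proof -
  have "h \<otimes> (inv h \<otimes> b) = b" if "b \<in> carrier G" for b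
    using assms that by (simp add: m_assoc[symmetric])
  then show ?thesis
    by (intro sum.reindex_bij_witness[where j = "\<lambda>g. h \<otimes> inv g" and i = "\<lambda>a. inv a \<otimes> h"])
      (use assms in \<open>auto simp: inv_mult_group m_assoc\<close>)
qed

locale vna_unitary_hom = tracial_von_neumann_algebra M \<tau> + group A
  for M :: "('k::chilbert_space \<Rightarrow> 'k) set" and \<tau> and A :: "('a, 'c) monoid_scheme" (structure) +
  fixes U :: "'a \<Rightarrow> 'k \<Rightarrow> 'k"
  assumes hom: "unitary_hom A M U"
begin

lemma unitary_hom_unitary: "a \<in> carrier A \<Longrightarrow> unitary_in M (U a)"
  using hom unfolding unitary_hom_def by blast

lemma unitary_hom_mult: "a \<in> carrier A \<Longrightarrow> b \<in> carrier A \<Longrightarrow> U (a \<otimes> b) = U a \<circ> U b"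
  using hom unfolding unitary_hom_def by blast

lemma tnorm2_sq_conj_translate:
  assumes X: "X \<in> M" and a: "a \<in> carrier A" and g: "g \<in> carrier A"
  defines "F \<equiv> \<lambda>h. U (inv h) \<circ> X \<circ> U h"
  shows "tnorm2_sq \<tau> (\<lambda>v. F (inv a \<otimes> g) v - F g v) = tnorm2_sq \<tau> (commutator (U a) X)"
proof -
  have "(\<lambda>v. F (inv a \<otimes> g) v - F g v) = U (inv g) \<circ> commutator (U a) X \<circ> U (inv a \<otimes> g)"
  proof
    fix v
    define x where "x = U (inv a \<otimes> g) v"
    have "U g v = U a x"
      using unitary_hom_mult[of a "inv a \<otimes> g"] a g by (simp add: x_def m_assoc[symmetric])
    moreover have "U (inv (inv a \<otimes> g)) = U (inv g) \<circ> U a"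
      using a g by (simp add: inv_mult_group unitary_hom_mult)
    moreover have "U (inv g) \<in> M"
      using g unitary_hom_unitary[of "inv g"] by (simp add: unitary_in_def)
    then have "clinear_map (U (inv g))"
      by (intro bounded_op_clinear bounded_op_of_in)
    ultimately show "F (inv a \<otimes> g) v - F g v = (U (inv g) \<circ> commutator (U a) X \<circ> U (inv a \<otimes> g)) v"
      by (simp add: F_def commutator_def x_def[symmetric] clinear_map_diff)
  qed
  moreover have "commutator (U a) X \<in> M"
    using a X unitary_hom_unitary[of a] by (simp add: commutator_in unitary_in_def)
  ultimately show ?thesis
    using a g by (simp add: tnorm2_sq_unitary_comp unitary_hom_unitary)
qed

lemma mean_commutator_le_admissible:
  assumes fin: "finite (carrier A)" and X: "X \<in> M"
    and "infinite_dimensional TYPE('h::chilbert_space)" "kappa_admissible TYPE('h) A \<mu> C"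
  shows "(\<Sum>a\<in>carrier A. tnorm2_sq \<tau> (commutator (U a) X)) / real (card (carrier A))
    \<le> C * (\<Sum>a\<in>carrier A. \<mu> a * tnorm2_sq \<tau> (commutator (U a) X))"
proof -
  define F where "F = (\<lambda>h. U (inv h) \<circ> X \<circ> U h)"
  define c where "c a = tnorm2_sq \<tau> (commutator (U a) X)" for a
  define n where "n = real (card (carrier A))"
  have n_pos: "n > 0" using fin by (auto simp: n_def card_gt_0_iff)
  have F_in: "F h \<in> M" if "h \<in> carrier A" for h
    using that X unitary_hom_unitary by (simp add: F_def comp_in unitary_in_def)
  have "\<exists>w. \<forall>g\<in>carrier A. \<forall>h\<in>carrier A.
      (\<Sum>k\<in>carrier A. (cmod (w g k - w h k))\<^sup>2) = tnorm2_sq \<tau> (\<lambda>v. F g v - F h v)"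
    by (rule exists_gram_coordinates[OF fin F_in])
  then obtain w where w: "\<forall>g\<in>carrier A. \<forall>h\<in>carrier A.
      (\<Sum>k\<in>carrier A. (cmod (w g k - w h k))\<^sup>2) = tnorm2_sq \<tau> (\<lambda>v. F g v - F h v)"
    by (elim exE)
  have displacement: "(\<Sum>k\<in>carrier A. (cmod (w (inv a \<otimes> g) k - w g k))\<^sup>2) = c a"
    if "a \<in> carrier A" "g \<in> carrier A" for a g
  proof -
    have "inv a \<otimes> g \<in> carrier A" using that by simp
    with w that have "(\<Sum>k\<in>carrier A. (cmod (w (inv a \<otimes> g) k - w g k))\<^sup>2)
        = tnorm2_sq \<tau> (\<lambda>v. F (inv a \<otimes> g) v - F g v)"
      by blast
    then show ?thesis
      using tnorm2_sq_conj_translate[OF X that] by (simp add: c_def F_def)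
  qed
  have "n * (\<Sum>a\<in>carrier A. c a) = (\<Sum>h\<in>carrier A. \<Sum>a\<in>carrier A. \<Sum>k\<in>carrier A. (cmod (w (inv a \<otimes> h) k - w h k))\<^sup>2)"
    by (simp add: displacement n_def)
  also have "\<dots> = (\<Sum>h\<in>carrier A. \<Sum>g\<in>carrier A. \<Sum>k\<in>carrier A. (cmod (w g k - w h k))\<^sup>2)"
    by (intro sum.cong refl sum_reindex_inv_mult[symmetric])
  also have "\<dots> = (\<Sum>g\<in>carrier A. \<Sum>h\<in>carrier A. \<Sum>k\<in>carrier A. (cmod (w g k - w h k))\<^sup>2)"
    by (rule sum.swap)
  also have "\<dots> \<le> n * C * (\<Sum>a\<in>carrier A. \<mu> a * (\<Sum>g\<in>carrier A. \<Sum>k\<in>carrier A. (cmod (w (inv a \<otimes> g) k - w g k))\<^sup>2))"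
    unfolding n_def by (rule kappa_admissible_sum_sq_dist[OF is_group fin fin assms(3,4)])
  also have "\<dots> = n * (n * (C * (\<Sum>a\<in>carrier A. \<mu> a * c a)))"
    by (simp add: displacement n_def sum_distrib_left mult_ac)
  finally have "(\<Sum>a\<in>carrier A. c a) \<le> n * (C * (\<Sum>a\<in>carrier A. \<mu> a * c a))"
    using n_pos by simp
  then show ?thesis
    using n_pos by (simp add: c_def n_def pos_divide_le_eq mult_ac)
qed

lemma mean_commutator_le_kappa:
  assumes "finite (carrier A)" "X \<in> M" "infinite_dimensional TYPE('h::chilbert_space)"
    and "\<And>a. a \<in> carrier A \<Longrightarrow> \<mu> a \<ge> 0" and "kappa TYPE('h) A \<mu> \<noteq> Orderings.top"
  shows "(\<Sum>a\<in>carrier A. tnorm2_sq \<tau> (commutator (U a) X)) / real (card (carrier A))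
    \<le> enn2real (kappa TYPE('h) A \<mu>) * (\<Sum>a\<in>carrier A. \<mu> a * tnorm2_sq \<tau> (commutator (U a) X))"
  using assms(5) unfolding kappa_eq_Inf_admissible
proof (rule le_enn2real_Inf_mult)
  show "0 \<le> (\<Sum>a\<in>carrier A. \<mu> a * tnorm2_sq \<tau> (commutator (U a) X))"
    using assms(2,4) unitary_hom_unitary
    by (intro sum_nonneg mult_nonneg_nonneg tnorm2_sq_nonneg commutator_in) (auto simp: unitary_in_def)
qed (rule mean_commutator_le_admissible[OF assms(1-3)])

end

lemma double_average_le:
  fixes c :: "'a \<Rightarrow> 'b \<Rightarrow> real"
  assumes "\<And>a. a \<in> A \<Longrightarrow> \<mu> a \<ge> 0" "kA \<ge> 0"
    and hA: "\<And>b. b \<in> B \<Longrightarrow> (\<Sum>a\<in>A. c a b) / real (card A) \<le> kA * (\<Sum>a\<in>A. \<mu> a * c a b)"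
    and hB: "\<And>a. a \<in> A \<Longrightarrow> (\<Sum>b\<in>B. c a b) / real (card B) \<le> kB * (\<Sum>b\<in>B. \<nu> b * c a b)"
  shows "(\<Sum>a\<in>A. \<Sum>b\<in>B. c a b) / (real (card A) * real (card B))
    \<le> kA * kB * (\<Sum>a\<in>A. \<Sum>b\<in>B. \<mu> a * \<nu> b * c a b)"
proof -
  have "(\<Sum>a\<in>A. \<Sum>b\<in>B. c a b) / (real (card A) * real (card B))
      = (\<Sum>b\<in>B. (\<Sum>a\<in>A. c a b) / real (card A)) / real (card B)"
    by (simp add: sum.swap[of _ A] sum_divide_distrib[symmetric] field_simps)
  also have "\<dots> \<le> (\<Sum>b\<in>B. kA * (\<Sum>a\<in>A. \<mu> a * c a b)) / real (card B)"
    using hA by (intro divide_right_mono sum_mono) auto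
  also have "\<dots> = kA * (\<Sum>a\<in>A. \<mu> a * ((\<Sum>b\<in>B. c a b) / real (card B)))"
    by (simp add: sum_distrib_left sum_divide_distrib sum.swap[of _ B] mult.assoc)
  also have "\<dots> \<le> kA * (\<Sum>a\<in>A. \<mu> a * (kB * (\<Sum>b\<in>B. \<nu> b * c a b)))"
    using hB assms(1,2) by (intro mult_left_mono sum_mono) auto
  also have "\<dots> = kA * kB * (\<Sum>a\<in>A. \<Sum>b\<in>B. \<mu> a * \<nu> b * c a b)"
    by (simp add: sum_distrib_left algebra_simps)
  finally show ?thesis .
qed

theorem theorem2p1:
  fixes A :: "('a, 'c) monoid_scheme" and B :: "('b, 'd) monoid_scheme"
    and \<mu> :: "'a \<Rightarrow> real" and \<nu> :: "'b \<Rightarrow> real"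
    and M :: "('k::chilbert_space \<Rightarrow> 'k) set" and \<tau> :: "('k \<Rightarrow> 'k) \<Rightarrow> complex"
    and U :: "'a \<Rightarrow> 'k \<Rightarrow> 'k" and V :: "'b \<Rightarrow> 'k \<Rightarrow> 'k"
  assumes "group A" "finite (carrier A)" "group B" "finite (carrier B)"
    and "prob_on (carrier A) \<mu>" "prob_on (carrier B) \<nu>"
    and "von_neumann_algebra M" "normal_faithful_tracial_state M \<tau>"
    and "unitary_hom A M U" "unitary_hom B M V"
    and "infinite_dimensional TYPE('h::chilbert_space)"
  shows "kappa TYPE('h) A \<mu> = Orderings.top \<or> kappa TYPE('h) B \<nu> = Orderings.top \<or>
    (\<Sum>a\<in>carrier A. \<Sum>b\<in>carrier B. tnorm2_sq \<tau> (commutator (U a) (V b)))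
        / (real (card (carrier A)) * real (card (carrier B)))
      \<le> enn2real (kappa TYPE('h) A \<mu>) * enn2real (kappa TYPE('h) B \<nu>) *
        (\<Sum>a\<in>carrier A. \<Sum>b\<in>carrier B. \<mu> a * \<nu> b * tnorm2_sq \<tau> (commutator (U a) (V b)))"
proof -
  interpret UA: vna_unitary_hom M \<tau> A U
    using assms(1,7-9) by (simp add: vna_unitary_hom_def vna_unitary_hom_axioms_def tracial_von_neumann_algebra_def)
  interpret VB: vna_unitary_hom M \<tau> B V
    using assms(3,7,8,10) by (simp add: vna_unitary_hom_def vna_unitary_hom_axioms_def tracial_von_neumann_algebra_def)
  have U_in: "\<And>a. a \<in> carrier A \<Longrightarrow> U a \<in> M" and V_in: "\<And>b. b \<in> carrier B \<Longrightarrow> V b \<in> M"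
    using UA.unitary_hom_unitary VB.unitary_hom_unitary by (auto simp: unitary_in_def)
  have \<mu>_nonneg: "\<And>a. a \<in> carrier A \<Longrightarrow> \<mu> a \<ge> 0" and \<nu>_nonneg: "\<And>b. b \<in> carrier B \<Longrightarrow> \<nu> b \<ge> 0"
    using assms(5,6) by (auto simp: prob_on_def)
  let ?c = "\<lambda>a b. tnorm2_sq \<tau> (commutator (U a) (V b))"
  show ?thesis
  proof (cases "kappa TYPE('h) A \<mu> = Orderings.top \<or> kappa TYPE('h) B \<nu> = Orderings.top")
    case False
    then have \<kappa>A: "kappa TYPE('h) A \<mu> \<noteq> Orderings.top" and \<kappa>B: "kappa TYPE('h) B \<nu> \<noteq> Orderings.top"
      by auto
    note bound_A = UA.mean_commutator_le_kappa[OF assms(2) V_in assms(11) \<mu>_nonneg \<kappa>A]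
    have bound_B: "(\<Sum>b\<in>carrier B. ?c a b) / real (card (carrier B))
        \<le> enn2real (kappa TYPE('h) B \<nu>) * (\<Sum>b\<in>carrier B. \<nu> b * ?c a b)" if "a \<in> carrier A" for a
      using VB.mean_commutator_le_kappa[OF assms(4) U_in[OF that] assms(11) \<nu>_nonneg \<kappa>B]
      by (simp add: UA.tnorm2_sq_commutator_swap U_in[OF that] V_in)
    show ?thesis
      using double_average_le[OF \<mu>_nonneg enn2real_nonneg bound_A bound_B] by blast
  qed blast
qed

end
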